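(* Let $N=2$ with $r_{11}=1$ and $g\in(-2,2)$. The Finsleroid Indicatrix $\{R\in\mathbb{R}^2: K(g;R)=1\}$ is strongly convex, i.e. it is a closed curve bounding a convex region and its (Euclidean) curvature as a plane curve is strictly positive at every point.
   Context: Here $V_2=\mathbb{R}^2$ with points $R=(R^1,R^2)$, $Z=R^2$, $q(R)=|R^1|$; $h=\sqrt{1-g^2/4}$, $G=g/h$. Define $B(g;R)=Z^2+gqZ+q^2$, $A(g;R)=Z+\frac12 gq$, $\Phi(g;R)=\arctan\big(A/(hq)\big)$ if $q>0$, $\Phi=\pi/2$ if $q=0,Z>0$, $\Phi=-\pi/2$ if $q=0,Z<0$; $J(g;R)=e^{\frac12 G\Phi}$ and the Finsleroid metric function $K(g;R)=\sqrt{B(g;R)}\,J(g;R)$ ($K(g;0)=0$). *)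

theory Defs
  imports "HOL-Analysis.Analysis"
begin

text \<open>Points R = (R^1, R^2) of V_2 = R^2 are pairs; Z = R^2, q = abs R^1.\<close>

definition fh :: "real \<Rightarrow> real" where "fh g = sqrt (1 - g^2 / 4)"
definition fG :: "real \<Rightarrow> real" where "fG g = g / fh g"
definition fq :: "real \<times> real \<Rightarrow> real" where "fq R = \<bar>fst R\<bar>"
definition fZ :: "real \<times> real \<Rightarrow> real" where "fZ R = snd R"

definition fB :: "real \<Rightarrow> real \<times> real \<Rightarrow> real" where
  "fB g R = (fZ R)^2 + g * fq R * fZ R + (fq R)^2"
definition fA :: "real \<Rightarrow> real \<times> real \<Rightarrow> real" where
  "fA g R = fZ R + g * fq R / 2"

definition fPhi :: "real \<Rightarrow> real \<times> real \<Rightarrow> real" where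
  "fPhi g R = (if fq R > 0 then arctan (fA g R / (fh g * fq R))
               else if fZ R > 0 then pi / 2
               else if fZ R < 0 then - pi / 2
               else 0)"  \<comment> \<open>value at R = 0 irrelevant, K(g;0)=0\<close>

definition fJ :: "real \<Rightarrow> real \<times> real \<Rightarrow> real" where
  "fJ g R = exp (fG g * fPhi g R / 2)"

definition finsleroidK :: "real \<Rightarrow> real \<times> real \<Rightarrow> real" where
  "finsleroidK g R = (if R = (0, 0) then 0 else sqrt (fB g R) * fJ g R)"

definition signed_curvature :: "real \<times> real \<Rightarrow> real \<times> real \<Rightarrow> real" where
  "signed_curvature d1 d2 =
     (fst d1 * snd d2 - snd d1 * fst d2) / (sqrt ((fst d1)^2 + (snd d1)^2)) ^ 3"

end

theory Submission
  imports Defs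
begin

(* In the coordinates u = h q, v = A one has B = u^2 + v^2, and Phi is the polar angle of (u, v);
   hence K = r e^(G Phi / 2) on each half plane R^1 >= 0, R^1 <= 0, and the indicatrix consists of
   two mirror-image arcs of the logarithmic spiral r = e^(-G phi / 2), |phi| <= pi / 2.

   Convexity: along any line, K is convex on each half plane, since in the spiral coordinates its
   second derivative is K (1 + G^2/4) (u v' - v u')^2 / r^4 >= 0; where the line crosses the axis
   R^1 = 0 the one-sided first derivatives agree, so K is convex along the whole line.

   Curvature: reparametrising the arc by s with ds/dphi = e^(-G phi) makes the areal velocity
   cross(gamma, gamma') constant (= 1/h), hence gamma'' = -k gamma with k > 0 (a central force), and
   the curvature k cross(gamma, gamma') / |gamma'|^3 is positive. Reflecting the arc and extending
   periodically gives a closed curve, twice differentiable because the pieces meet the axis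
   orthogonally. *)

section \<open>The spiral gauge\<close>

definition cross :: "real \<times> real \<Rightarrow> real \<times> real \<Rightarrow> real" where
  "cross a b = fst a * snd b - snd a * fst b"

definition mirror :: "real \<times> real \<Rightarrow> real \<times> real" where
  "mirror p = (- fst p, snd p)"

lemma mirror_simps [simp]:
  "fst (mirror p) = - fst p" "snd (mirror p) = snd p" "mirror (mirror p) = p"
  "mirror (c *\<^sub>R p) = c *\<^sub>R mirror p" "mirror (- p) = - mirror p"
  "mirror (p + q) = mirror p + mirror q"
  unfolding mirror_def by simp_all

lemma mirror_eq_0_iff [simp]: "mirror p = 0 \<longleftrightarrow> p = 0"
  unfolding mirror_def by (simp add: prod_eq_iff)

lemma bounded_linear_mirror: "bounded_linear mirror"
  unfolding mirror_def
  by (intro bounded_linear_Pair bounded_linear_minus bounded_linear_fst bounded_linear_snd)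

lemma norm_real_pair: "norm (w :: real \<times> real) = sqrt ((fst w)^2 + (snd w)^2)"
  by (cases w) (simp add: norm_Pair)

lemma norm_add_fst_pos:
  fixes w :: "real \<times> real"
  assumes "fst w \<ge> 0" "w \<noteq> 0"
  shows "norm w + fst w > 0"
  using assms by (intro add_pos_nonneg) simp_all

lemma arctan_eq_double_arctan_half:
  fixes x y :: real
  assumes "x > 0"
  shows "arctan (y / x) = 2 * arctan (y / (sqrt (x^2 + y^2) + x))"
proof -
  define r where "r = sqrt (x^2 + y^2)"
  define t where "t = y / (r + x)"
  have r2: "r^2 = x^2 + y^2" unfolding r_def by simp
  have rx: "r + x > 0" using assms unfolding r_def by (simp add: add_nonneg_pos)
  have "\<bar>y\<bar> < r + x" using assms real_sqrt_ge_abs2[of y x] unfolding r_def by linarith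
  then have t1: "\<bar>t\<bar> < 1" using rx unfolding t_def by (simp add: abs_divide)
  have "1 - t^2 = ((r + x)^2 - y^2) / (r + x)^2"
    using rx by (simp add: t_def power_divide field_simps)
  also have "(r + x)^2 - y^2 = 2 * x * (r + x)"
    using r2 by (simp add: power2_eq_square algebra_simps)
  finally have "1 - t^2 = 2 * x / (r + x)"
    using rx by (simp add: power2_eq_square)
  then have "2 * t / (1 - t^2) = y / x"
    using assms rx by (simp add: t_def field_simps)
  then show ?thesis
    using arctan_double[OF t1] unfolding t_def r_def by simp
qed

text \<open>For \<open>fst w \<ge> 0\<close> the arctangent below is half the polar angle \<open>\<phi>\<close> of \<open>w\<close>, so
  \<open>spiral_gauge c w = \<bar>w\<bar> e\<^bsup>c\<phi>/2\<^esup>\<close>: its unit level set is a logarithmic spiral.\<close>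
definition spiral_gauge :: "real \<Rightarrow> real \<times> real \<Rightarrow> real" where
  "spiral_gauge c w = norm w * exp (c * arctan (snd w / (norm w + fst w)))"

lemma polar_half_angle:
  fixes w :: "real \<times> real"
  assumes pos: "norm w + fst w > 0"
  shows "norm w * cos (2 * arctan (snd w / (norm w + fst w))) = fst w"
    and "norm w * sin (2 * arctan (snd w / (norm w + fst w))) = snd w"
proof -
  define r where "r = norm w"
  define R where "R = r + fst w"
  define x where "x = snd w / R"
  have R: "R > 0" using pos unfolding R_def r_def .
  have rr: "r * r = fst w * fst w + snd w * snd w"
    unfolding r_def norm_real_pair by (simp flip: power2_eq_square)
  have "w \<noteq> 0" using R unfolding R_def r_def by auto
  then have r: "r > 0" unfolding r_def by simp
  have "1 + x^2 = (R * R + snd w * snd w) / (R * R)"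
    unfolding x_def using R by (simp add: field_simps power2_eq_square)
  also have "R * R + snd w * snd w = 2 * r * R" unfolding R_def using rr by algebra
  finally have plus: "1 + x^2 = 2 * r / R" using R by (simp add: field_simps)
  have "1 - x^2 = (R * R - snd w * snd w) / (R * R)"
    unfolding x_def using R by (simp add: field_simps power2_eq_square)
  also have "R * R - snd w * snd w = 2 * fst w * R" unfolding R_def using rr by algebra
  finally have minus: "1 - x^2 = 2 * fst w / R" using R by (simp add: field_simps)
  have "cos (2 * arctan x) = (1 - x^2) / (1 + x^2)"
    unfolding cos_double cos_arctan sin_arctan by (simp add: power_divide diff_divide_distrib)
  also have "\<dots> = fst w / r" unfolding plus minus using R r by (simp add: field_simps)
  finally show "norm w * cos (2 * arctan (snd w / (norm w + fst w))) = fst w"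
    using r unfolding x_def R_def r_def by simp
  have "sin (2 * arctan x) = 2 * x / (1 + x^2)"
    unfolding sin_double cos_arctan sin_arctan by (simp add: field_simps)
  also have "\<dots> = snd w / r" unfolding plus using R r by (simp add: x_def field_simps)
  finally show "norm w * sin (2 * arctan (snd w / (norm w + fst w))) = snd w"
    using r unfolding x_def R_def r_def by simp
qed

lemma spiral_gauge_nonneg: "spiral_gauge c w \<ge> 0"
  unfolding spiral_gauge_def by simp

lemma spiral_gauge_zero [simp]: "spiral_gauge c 0 = 0"
  unfolding spiral_gauge_def by simp

lemma spiral_gauge_pos: "w \<noteq> 0 \<Longrightarrow> spiral_gauge c w > 0"
  unfolding spiral_gauge_def by simp

lemma spiral_gauge_scaleR:
  assumes "a \<ge> 0"
  shows "spiral_gauge c (a *\<^sub>R w) = a * spiral_gauge c w"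
proof (cases "a = 0")
  case False
  then have "a * snd w / (a * norm w + a * fst w) = snd w / (norm w + fst w)"
    by (simp flip: distrib_left)
  then show ?thesis
    using assms unfolding spiral_gauge_def by (simp add: distrib_left)
qed simp

lemma spiral_gauge_polar:
  assumes "\<rho> > 0" "-pi < \<phi>" "\<phi> < pi"
  shows "spiral_gauge c (\<rho> * cos \<phi>, \<rho> * sin \<phi>) = \<rho> * exp (c * \<phi> / 2)"
proof -
  have norm: "norm (\<rho> * cos \<phi>, \<rho> * sin \<phi>) = \<rho>"
    using assms(1) by (simp add: norm_real_pair power_mult_distrib flip: distrib_left)
  have "cos (\<phi> / 2) > 0" using assms by (intro cos_gt_zero_pi) simp_all
  then have "1 + cos \<phi> > 0" using cos_double_cos[of "\<phi> / 2"] by simp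
  moreover have "\<rho> + \<rho> * cos \<phi> = \<rho> * (1 + cos \<phi>)" by (simp add: algebra_simps)
  ultimately have "\<rho> * sin \<phi> / (\<rho> + \<rho> * cos \<phi>) = tan (\<phi> / 2)"
    using assms(1) tan_half[of "\<phi> / 2"] by (simp add: add.commute)
  moreover have "arctan (tan (\<phi> / 2)) = \<phi> / 2"
    using assms by (intro arctan_tan) simp_all
  ultimately show ?thesis
    unfolding spiral_gauge_def norm by simp
qed

lemma spiral_gauge_le: "spiral_gauge c w \<le> exp (\<bar>c\<bar> * pi / 2) * norm w"
proof -
  have "c * arctan x \<le> \<bar>c\<bar> * (pi / 2)" for x
  proof -
    have "c * arctan x \<le> \<bar>c\<bar> * \<bar>arctan x\<bar>" by (simp flip: abs_mult)
    also have "\<dots> \<le> \<bar>c\<bar> * (pi / 2)"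
      using arctan_bounded[of x] by (intro mult_left_mono) auto
    finally show ?thesis .
  qed
  then have "exp (c * arctan (snd w / (norm w + fst w))) \<le> exp (\<bar>c\<bar> * pi / 2)" by simp
  then show ?thesis unfolding spiral_gauge_def by (simp add: mult.commute mult_left_mono)
qed

section \<open>Convexity of the spiral gauge along lines\<close>

lemma half_polar_angle_deriv_eq:
  fixes U V U' V' r :: real
  assumes r: "r > 0" and rr: "r * r = U * U + V * V" and S: "r + U > 0"
  shows "(V' * (r + U) - V * ((U * U' + V * V') / r + U')) / (r + U)^2 / (1 + (V / (r + U))^2)
     = (U * V' - V * U') / (2 * (U^2 + V^2))"
proof -
  have "(r + U)^2 + V^2 = 2 * r * (r + U)" using rr by algebra
  then have den: "1 + (V / (r + U))^2 = 2 * r / (r + U)"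
    using S by (simp add: field_simps) (simp add: power2_eq_square algebra_simps)
  have num: "V' * (r + U) - V * ((U * U' + V * V') / r + U') = (U * V' - V * U') * (r + U) / r"
    using r rr by (simp add: field_simps)
  have "X * S / r / S^2 / (2 * r / S) = X / (2 * (r * r))" if "S > 0" for X S :: real
    using r that by (simp add: field_simps power2_eq_square)
  from this[OF S] show ?thesis unfolding num den rr by (simp add: power2_eq_square)
qed

lemma has_real_derivative_sqrt_sum_squares:
  fixes U V :: "real \<Rightarrow> real"
  assumes "(U has_real_derivative U') (at t)" and "(V has_real_derivative V') (at t)"
    and "(U t)^2 + (V t)^2 > 0"
  shows "((\<lambda>t. sqrt ((U t)^2 + (V t)^2)) has_real_derivative
           (U t * U' + V t * V') / sqrt ((U t)^2 + (V t)^2)) (at t)"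
proof -
  define a where "a = U t * U' + V t * V'"
  have "((\<lambda>t. (U t)^2 + (V t)^2) has_real_derivative 2 * a) (at t)"
    unfolding a_def using assms by (auto intro!: derivative_eq_intros simp: algebra_simps)
  from DERIV_chain2[OF DERIV_real_sqrt[OF assms(3)] this]
  have "((\<lambda>t. sqrt ((U t)^2 + (V t)^2)) has_real_derivative a / sqrt ((U t)^2 + (V t)^2)) (at t)"
    by (simp add: inverse_eq_divide)
  then show ?thesis unfolding a_def .
qed

lemma has_real_derivative_half_polar_angle:
  fixes U V :: "real \<Rightarrow> real"
  assumes dU: "(U has_real_derivative U') (at t)" and dV: "(V has_real_derivative V') (at t)"
    and pos: "sqrt ((U t)^2 + (V t)^2) + U t > 0"
  shows "((\<lambda>t. arctan (V t / (sqrt ((U t)^2 + (V t)^2) + U t))) has_real_derivative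
           (U t * V' - V t * U') / (2 * ((U t)^2 + (V t)^2))) (at t)"
proof -
  define r where "r = sqrt ((U t)^2 + (V t)^2)"
  have N: "(U t)^2 + (V t)^2 > 0" using pos by (auto simp: sum_power2_gt_zero_iff)
  then have r: "r > 0" and rr: "r * r = U t * U t + V t * V t"
    unfolding r_def by (simp_all flip: power2_eq_square)
  have dr: "((\<lambda>t. sqrt ((U t)^2 + (V t)^2)) has_real_derivative (U t * U' + V t * V') / r) (at t)"
    unfolding r_def by (rule has_real_derivative_sqrt_sum_squares[OF dU dV N])
  have dq: "((\<lambda>t. V t / (sqrt ((U t)^2 + (V t)^2) + U t)) has_real_derivative
      (V' * (r + U t) - V t * ((U t * U' + V t * V') / r + U')) / (r + U t)^2) (at t)"
    using DERIV_divide[OF dV DERIV_add[OF dr dU]] pos unfolding r_def by (simp add: power2_eq_square)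
  show ?thesis
    using DERIV_chain2[OF DERIV_arctan dq] half_polar_angle_deriv_eq[OF r rr pos[folded r_def]]
    unfolding r_def by (simp add: divide_inverse mult.commute)
qed

lemma line_eq_Pair: "W + t *\<^sub>R D = (fst W + t * fst D, snd W + t * snd D)"
  by (simp add: prod_eq_iff)

definition spiral_gauge_slope :: "real \<Rightarrow> real \<times> real \<Rightarrow> real \<times> real \<Rightarrow> real \<Rightarrow> real" where
  "spiral_gauge_slope c W D t = spiral_gauge c (W + t *\<^sub>R D)
     * ((W + t *\<^sub>R D) \<bullet> D + c * cross W D / 2) / (norm (W + t *\<^sub>R D))^2"

lemma spiral_gauge_line_has_derivative:
  assumes pos: "norm (W + t *\<^sub>R D) + fst (W + t *\<^sub>R D) > 0"
  shows "((\<lambda>t. spiral_gauge c (W + t *\<^sub>R D)) has_real_derivative spiral_gauge_slope c W D t) (at t)"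
proof -
  define U where "U t = fst W + t * fst D" for t
  define V where "V t = snd W + t * snd D" for t
  define N where "N t = sqrt ((U t)^2 + (V t)^2)" for t
  define A where "A t = arctan (V t / (N t + U t))" for t
  define E where "E = exp (c * A t)"
  have line: "W + t *\<^sub>R D = (U t, V t)" for t
    unfolding U_def V_def by (rule line_eq_Pair)
  have pos': "sqrt ((U t)^2 + (V t)^2) + U t > 0"
    using pos unfolding line norm_real_pair by simp
  then have N2: "(U t)^2 + (V t)^2 > 0" by (auto simp: sum_power2_gt_zero_iff)
  then have N: "N t > 0" unfolding N_def by simp
  have dU: "(U has_real_derivative fst D) (at t)" and dV: "(V has_real_derivative snd D) (at t)"
    unfolding U_def V_def by (auto intro!: derivative_eq_intros)
  have dA: "(A has_real_derivative (U t * snd D - V t * fst D) / (2 * ((U t)^2 + (V t)^2))) (at t)"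
    unfolding A_def N_def by (rule has_real_derivative_half_polar_angle[OF dU dV pos'])
  have dN: "(N has_real_derivative (U t * fst D + V t * snd D) / N t) (at t)"
    unfolding N_def by (rule has_real_derivative_sqrt_sum_squares[OF dU dV N2])
  have "((\<lambda>t. N t * exp (c * A t)) has_real_derivative (U t * fst D + V t * snd D) / N t * E
        + N t * (E * (c * ((U t * snd D - V t * fst D) / (2 * ((U t)^2 + (V t)^2)))))) (at t)"
    unfolding E_def by (auto intro!: derivative_eq_intros dA dN)
  moreover have "(\<lambda>t. spiral_gauge c (W + t *\<^sub>R D)) = (\<lambda>t. N t * exp (c * A t))"
    unfolding spiral_gauge_def line norm_real_pair N_def A_def by simp
  moreover have "spiral_gauge_slope c W D t = (U t * fst D + V t * snd D) / N t * E
        + N t * (E * (c * ((U t * snd D - V t * fst D) / (2 * ((U t)^2 + (V t)^2)))))"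
  proof -
    have cross: "cross W D = U t * snd D - V t * fst D"
      unfolding cross_def U_def V_def by (simp add: algebra_simps)
    have inner: "(W + t *\<^sub>R D) \<bullet> D = U t * fst D + V t * snd D"
      unfolding line by (cases D) simp
    have norm: "norm (W + t *\<^sub>R D) = N t" and NN: "(U t)^2 + (V t)^2 = (N t)^2"
      unfolding line norm_real_pair N_def by simp_all
    have gauge: "spiral_gauge c (W + t *\<^sub>R D) = N t * E"
      unfolding spiral_gauge_def line norm_real_pair N_def A_def E_def by simp
    show ?thesis
      using N unfolding spiral_gauge_slope_def cross inner norm NN gauge
      by (simp add: field_simps power2_eq_square)
  qed
  ultimately show ?thesis by simp
qed

lemma cross_squared: "(cross a b)^2 = (norm a)^2 * (norm b)^2 - (a \<bullet> b)^2"
  by (cases a, cases b) (simp add: cross_def norm_real_pair power2_eq_square algebra_simps)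

lemma cross_line: "cross (W + t *\<^sub>R D) D = cross W D"
  unfolding cross_def by (simp add: algebra_simps)

lemma spiral_gauge_slope_has_derivative:
  assumes pos: "norm (W + t *\<^sub>R D) + fst (W + t *\<^sub>R D) > 0"
  shows "(spiral_gauge_slope c W D has_real_derivative
           spiral_gauge c (W + t *\<^sub>R D) * (1 + c^2/4) * (cross W D)^2 / (norm (W + t *\<^sub>R D))^4) (at t)"
proof -
  define w where "w t = W + t *\<^sub>R D" for t
  define K where "K t = spiral_gauge c (w t)" for t
  define M where "M t = w t \<bullet> D + c * cross W D / 2" for t
  define N where "N t = (norm (w t))^2" for t
  have "w t \<noteq> 0"
  proof
    assume "w t = 0"
    with pos show False unfolding w_def by simp
  qed
  then have N: "N t > 0" unfolding N_def by simp
  have dK: "(K has_real_derivative K t * M t / N t) (at t)"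
    using spiral_gauge_line_has_derivative[OF pos]
    unfolding K_def M_def N_def w_def spiral_gauge_slope_def .
  have "M = (\<lambda>t. W \<bullet> D + t * (D \<bullet> D) + c * cross W D / 2)"
    unfolding M_def w_def by (simp add: inner_add_left)
  then have dM: "(M has_real_derivative D \<bullet> D) (at t)"
    by (auto intro!: derivative_eq_intros)
  have "N = (\<lambda>t. W \<bullet> W + 2 * t * (W \<bullet> D) + t^2 * (D \<bullet> D))"
    unfolding N_def w_def power2_norm_eq_inner
    by (simp add: inner_add_left inner_add_right inner_commute power2_eq_square algebra_simps)
  then have dN: "(N has_real_derivative 2 * (w t \<bullet> D)) (at t)"
    unfolding w_def by (auto intro!: derivative_eq_intros simp: inner_add_left algebra_simps)
  have lagrange: "(M t)^2 + (D \<bullet> D) * N t - 2 * (w t \<bullet> D) * M t = (1 + c^2/4) * (cross W D)^2"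
    using cross_squared[of "w t" D] unfolding M_def N_def cross_line[of W t D, folded w_def]
      power2_norm_eq_inner[of D, symmetric]
    by (simp add: power2_eq_square algebra_simps)
  have slope: "spiral_gauge_slope c W D = (\<lambda>t. K t * M t / N t)"
    unfolding spiral_gauge_slope_def K_def M_def N_def w_def ..
  have "((K t * M t / N t * M t + (D \<bullet> D) * K t) * N t - K t * M t * (2 * (w t \<bullet> D))) / (N t * N t)
      = K t * ((M t)^2 + (D \<bullet> D) * N t - 2 * (w t \<bullet> D) * M t) / (N t)^2"
    using N by (simp add: field_simps power2_eq_square)
  also have "\<dots> = K t * (1 + c^2/4) * (cross W D)^2 / (norm (w t))^4"
    using lagrange unfolding N_def by (simp add: mult.assoc)
  finally show ?thesis
    using DERIV_divide[OF DERIV_mult[OF dK dM] dN] N unfolding slope K_def w_def by simp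
qed

lemma has_vector_derivative_split_at:
  fixes f1 f2 :: "real \<Rightarrow> 'a::real_normed_vector"
  assumes d1: "(f1 has_vector_derivative D) (at a)" and d2: "(f2 has_vector_derivative D) (at a)"
    and eq: "f1 a = f2 a"
  shows "((\<lambda>x. if x \<le> a then f1 x else f2 x) has_vector_derivative D) (at a)"
proof -
  let ?f = "\<lambda>x. if x \<le> a then f1 x else f2 x"
  have "(?f has_vector_derivative D) (at a within {..a})"
    by (rule has_vector_derivative_transform[OF _ _ has_vector_derivative_at_within[OF d1]]) auto
  moreover have "(?f has_vector_derivative D) (at a within {a..})"
    by (rule has_vector_derivative_transform[OF _ _ has_vector_derivative_at_within[OF d2]])
      (use eq in auto)
  ultimately have "(?f has_vector_derivative D) (at a within ({..a} \<union> {a..}))"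
    unfolding has_vector_derivative_def has_derivative_within Lim_within_Un by auto
  moreover have "{..a} \<union> {a..} = (UNIV :: real set)" by auto
  ultimately show ?thesis by simp
qed

lemma mono_on_if_deriv_nonneg:
  fixes f :: "real \<Rightarrow> real"
  assumes "convex I" and "\<And>t. t \<in> I \<Longrightarrow> \<exists>y. (f has_real_derivative y) (at t) \<and> y \<ge> 0"
  shows "mono_on I f"
proof (rule mono_onI)
  fix x y assume xy: "x \<in> I" "y \<in> I" "x \<le> y"
  then have "closed_segment x y \<subseteq> I"
    using assms(1) by (simp add: convex_contains_segment)
  with xy have sub: "{x..y} \<subseteq> I" by (simp add: closed_segment_eq_real_ivl)
  show "f x \<le> f y"
  proof (rule DERIV_nonneg_imp_nondecreasing[OF \<open>x \<le> y\<close>])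
    fix t assume "x \<le> t" "t \<le> y"
    with sub show "\<exists>y. (f has_real_derivative y) (at t) \<and> y \<ge> 0"
      by (intro assms(2)) auto
  qed
qed

lemma mono_on_split_at:
  fixes D1 D2 :: "real \<Rightarrow> real"
  assumes mono1: "mono_on {..a} D1" and mono2: "mono_on {a..} D2" and eq: "D1 a = D2 a"
  shows "mono (\<lambda>t. if t \<le> a then D1 t else D2 t)"
proof (rule monoI)
  fix x y :: real assume "x \<le> y"
  consider "y \<le> a" | "x \<le> a" "a < y" | "a < x" by linarith
  then show "(if x \<le> a then D1 x else D2 x) \<le> (if y \<le> a then D1 y else D2 y)"
  proof cases
    case 1
    then show ?thesis using mono_onD[OF mono1, of x y] \<open>x \<le> y\<close> by simp
  next
    case 2
    then show ?thesis using mono_onD[OF mono1, of x a] mono_onD[OF mono2, of a y] eq by simp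
  next
    case 3
    then show ?thesis using mono_onD[OF mono2, of x y] \<open>x \<le> y\<close> by simp
  qed
qed

lemma convex_on_split_at:
  fixes F F1 F2 D1 D2 :: "real \<Rightarrow> real"
  assumes F1: "\<And>t. t \<le> a \<Longrightarrow> F t = F1 t" and F2: "\<And>t. a \<le> t \<Longrightarrow> F t = F2 t"
    and dF1: "\<And>t. t \<le> a \<Longrightarrow> (F1 has_real_derivative D1 t) (at t)"
    and dF2: "\<And>t. a \<le> t \<Longrightarrow> (F2 has_real_derivative D2 t) (at t)"
    and mono1: "mono_on {..a} D1" and mono2: "mono_on {a..} D2" and eq: "D1 a = D2 a"
  shows "convex_on UNIV F"
proof (rule convex_on_realI)
  define D where "D t = (if t \<le> a then D1 t else D2 t)" for t
  have F: "F = (\<lambda>t. if t \<le> a then F1 t else F2 t)"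
    using F1 F2 by (intro ext) auto
  show "(F has_real_derivative D t) (at t)" for t
  proof (cases t a rule: linorder_cases)
    case less
    have "(F has_real_derivative D1 t) (at t)"
      by (rule has_field_derivative_transform_within_open[OF dF1[of t], where S="{..<a}"])
        (use less in \<open>auto simp: F\<close>)
    with less show ?thesis by (simp add: D_def)
  next
    case greater
    have "(F has_real_derivative D2 t) (at t)"
      by (rule has_field_derivative_transform_within_open[OF dF2[of t], where S="{a<..}"])
        (use greater in \<open>auto simp: F\<close>)
    with greater show ?thesis by (simp add: D_def)
  next
    case equal
    have "F1 a = F2 a" using F1 F2 by (metis order_refl)
    then show ?thesis
      using has_vector_derivative_split_at[of F1 "D1 a" a F2] dF1[of a] dF2[of a] eq equal
      unfolding F D_def has_real_derivative_iff_has_vector_derivative by simp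
  qed
  show "D x \<le> D y" if "x \<le> y" for x y
    using mono_on_split_at[OF mono1 mono2 eq] that unfolding D_def by (rule monoD)
qed simp

lemma convex_on_max_affine: "convex_on UNIV (\<lambda>t::real. max (a * t + b) (c * t + d))"
proof (rule convex_onI)
  fix t x y :: real assume t: "0 < t" "t < 1"
  let ?m = "\<lambda>x. max (a * x + b) (c * x + d)"
  have "a * ((1 - t) * x + t * y) + b = (1 - t) * (a * x + b) + t * (a * y + b)"
    by (simp add: algebra_simps)
  also have "\<dots> \<le> (1 - t) * ?m x + t * ?m y"
    using t by (intro add_mono mult_left_mono) auto
  finally have 1: "a * ((1 - t) * x + t * y) + b \<le> (1 - t) * ?m x + t * ?m y" .
  have "c * ((1 - t) * x + t * y) + d = (1 - t) * (c * x + d) + t * (c * y + d)"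
    by (simp add: algebra_simps)
  also have "\<dots> \<le> (1 - t) * ?m x + t * ?m y"
    using t by (intro add_mono mult_left_mono) auto
  finally have 2: "c * ((1 - t) * x + t * y) + d \<le> (1 - t) * ?m x + t * ?m y" .
  from 1 2 show "?m ((1 - t) *\<^sub>R x + t *\<^sub>R y) \<le> (1 - t) * ?m x + t * ?m y"
    by simp
qed simp

lemma mono_on_spiral_gauge_slope:
  assumes "convex I" and "\<And>t. t \<in> I \<Longrightarrow> norm (W + t *\<^sub>R D) + fst (W + t *\<^sub>R D) > 0"
  shows "mono_on I (spiral_gauge_slope c W D)"
proof (rule mono_on_if_deriv_nonneg[OF assms(1)])
  fix t assume "t \<in> I"
  have "0 \<le> 1 + c^2/4" by (simp add: add_nonneg_nonneg)
  then have "0 \<le> spiral_gauge c (W + t *\<^sub>R D) * (1 + c^2/4) * (cross W D)^2 / (norm (W + t *\<^sub>R D))^4"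
    by (intro divide_nonneg_nonneg mult_nonneg_nonneg spiral_gauge_nonneg) simp_all
  with spiral_gauge_slope_has_derivative[OF assms(2)[OF \<open>t \<in> I\<close>]]
  show "\<exists>y. (spiral_gauge_slope c W D has_real_derivative y) (at t) \<and> y \<ge> 0"
    by (intro exI conjI)
qed

section \<open>Convexity of the Finsleroid metric function\<close>

locale finsleroid =
  fixes g :: real
  assumes g_gt: "-2 < g" and g_lt: "g < 2"
begin

abbreviation "h \<equiv> fh g"
abbreviation "G \<equiv> fG g"

lemma g_squared_less_4: "g^2 < 4"
proof -
  have "\<bar>g\<bar>^2 < 2^2" using g_gt g_lt by (intro power_strict_mono) auto
  then show ?thesis by simp
qed

lemma fh_squared: "h^2 = 1 - g^2 / 4"
  using g_squared_less_4 unfolding fh_def by (subst real_sqrt_pow2) simp_all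

lemma fh_pos: "h > 0"
  using g_squared_less_4 unfolding fh_def by simp

lemma fh_le_1: "h \<le> 1"
proof -
  have "h^2 \<le> 1^2" using fh_squared by simp
  then show ?thesis by (rule power2_le_imp_le) simp
qed

lemma fG_mult_fh: "G * h = g"
  using fh_pos unfolding fG_def by simp

text \<open>On \<open>R\<^sup>1 \<ge> 0\<close> these are \<open>(u, v) = (h q, A)\<close>, in which \<open>B = u\<^sup>2 + v\<^sup>2\<close> and \<open>\<Phi>\<close> is the
  polar angle of \<open>(u, v)\<close>.\<close>
definition spiral_coords :: "real \<times> real \<Rightarrow> real \<times> real" where
  "spiral_coords R = (h * fst R, snd R + g * fst R / 2)"

lemma spiral_coords_simps [simp]:
  "spiral_coords (P + Q) = spiral_coords P + spiral_coords Q"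
  "spiral_coords (c *\<^sub>R P) = c *\<^sub>R spiral_coords P"
  "fst (spiral_coords P) = h * fst P"
  unfolding spiral_coords_def by (simp_all add: algebra_simps)

lemma spiral_coords_eq_0_iff [simp]: "spiral_coords R = 0 \<longleftrightarrow> R = 0"
  using fh_pos unfolding spiral_coords_def by (auto simp: prod_eq_iff)

lemma finsleroidK_eq_spiral_gauge: "finsleroidK g R = spiral_gauge G (h * fq R, fA g R)"
proof (cases "R = 0")
  case True
  then show ?thesis
    unfolding finsleroidK_def fq_def fA_def fZ_def by (simp add: zero_prod_def spiral_gauge_def)
next
  case False
  have B: "norm (h * fq R, fA g R) = sqrt (fB g R)"
    unfolding norm_real_pair fB_def fA_def
    by (simp add: power_mult_distrib fh_squared) (simp add: power2_eq_square algebra_simps)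
  have K: "finsleroidK g R = sqrt (fB g R) * exp (G * (fPhi g R / 2))"
    using False unfolding finsleroidK_def fJ_def zero_prod_def by simp
  show ?thesis
  proof (cases "fq R > 0")
    case True
    then have "fPhi g R / 2 = arctan (fA g R / (sqrt ((h * fq R)^2 + (fA g R)^2) + h * fq R))"
      using arctan_eq_double_arctan_half[of "h * fq R" "fA g R"] fh_pos unfolding fPhi_def by simp
    then show ?thesis unfolding K spiral_gauge_def B[symmetric] norm_real_pair by simp
  next
    case False
    then have q: "fq R = 0" and "fst R = 0" unfolding fq_def by simp_all
    then have "fZ R \<noteq> 0" and A: "fA g R = fZ R"
      using \<open>R \<noteq> 0\<close> unfolding fZ_def fA_def by (auto simp: prod_eq_iff)
    then consider "fZ R > 0" | "fZ R < 0" by linarith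
    then show ?thesis
      by cases (simp_all add: K spiral_gauge_def B[symmetric] q A fPhi_def arctan_minus)
  qed
qed

lemma finsleroidK_right:
  assumes "fst R \<ge> 0"
  shows "finsleroidK g R = spiral_gauge G (spiral_coords R)"
  using assms unfolding finsleroidK_eq_spiral_gauge spiral_coords_def fq_def fA_def fZ_def
  by (simp add: add.commute)

lemma finsleroidK_mirror [simp]: "finsleroidK g (mirror R) = finsleroidK g R"
  unfolding finsleroidK_eq_spiral_gauge fq_def fA_def fZ_def by simp

lemma finsleroidK_left:
  assumes "fst R \<le> 0"
  shows "finsleroidK g R = spiral_gauge G (spiral_coords (mirror R))"
  using finsleroidK_right[of "mirror R"] assms by simp

lemma finsleroidK_nonneg: "finsleroidK g R \<ge> 0"
  unfolding finsleroidK_eq_spiral_gauge by (rule spiral_gauge_nonneg)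

lemma finsleroidK_zero [simp]: "finsleroidK g 0 = 0"
  unfolding finsleroidK_def by (simp add: zero_prod_def)

lemma finsleroidK_pos:
  assumes "R \<noteq> 0"
  shows "finsleroidK g R > 0"
proof (cases "fst R \<ge> 0")
  case True
  then show ?thesis using assms by (simp add: finsleroidK_right spiral_gauge_pos)
next
  case False
  then show ?thesis using assms
    by (simp add: finsleroidK_left spiral_gauge_pos)
qed

lemma finsleroidK_scaleR:
  assumes "c \<ge> 0"
  shows "finsleroidK g (c *\<^sub>R R) = c * finsleroidK g R"
proof (cases "fst R \<ge> 0")
  case True
  then show ?thesis
    using assms by (simp add: finsleroidK_right spiral_gauge_scaleR mult_nonneg_nonneg)
next
  case False
  then show ?thesis
    using assms by (simp add: finsleroidK_left spiral_gauge_scaleR mult_nonneg_nonpos)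
qed

lemma norm_add_fst_spiral_coords_pos:
  assumes "fst R \<ge> 0" "R \<noteq> 0"
  shows "norm (spiral_coords R) + fst (spiral_coords R) > 0"
  using assms fh_pos by (intro norm_add_fst_pos) simp_all

lemma spiral_gauge_slope_mirror_axis:
  assumes "fst (P + a *\<^sub>R V) = 0"
  shows "spiral_gauge_slope G (spiral_coords (mirror P)) (spiral_coords (mirror V)) a
       = spiral_gauge_slope G (spiral_coords P) (spiral_coords V) a"
proof -
  define y where "y = snd (P + a *\<^sub>R V)"
  have slope: "spiral_gauge_slope G W D a = spiral_gauge G (0, y) * (y * snd V) / (norm (0, y))^2"
    if "W + a *\<^sub>R D = (0, y)" and "D = (k * h * fst V, snd V + k * g * fst V / 2)" for W D k
  proof -
    have "(0, y) \<bullet> D + G * cross (0, y) D / 2 = y * snd V + k * y * fst V * (g - G * h) / 2"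
      unfolding that(2) cross_def by (simp add: field_simps)
    then show ?thesis
      unfolding spiral_gauge_slope_def cross_line[of W a D, symmetric] that(1) fG_mult_fh by simp
  qed
  have "fst P = - (a * fst V)" using assms by simp
  then have "spiral_coords P + a *\<^sub>R spiral_coords V = (0, y)"
    "spiral_coords (mirror P) + a *\<^sub>R spiral_coords (mirror V) = (0, y)"
    unfolding spiral_coords_def y_def by (simp_all add: algebra_simps)
  moreover have "spiral_coords V = (1 * h * fst V, snd V + 1 * g * fst V / 2)"
    "spiral_coords (mirror V) = ((-1) * h * fst V, snd V + (-1) * g * fst V / 2)"
    unfolding spiral_coords_def by simp_all
  ultimately show ?thesis using slope by metis
qed

lemma finsleroidK_line_convex_right:
  assumes nz: "\<And>t. P + t *\<^sub>R V \<noteq> 0" and V: "fst V > 0"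
  shows "convex_on UNIV (\<lambda>t. finsleroidK g (P + t *\<^sub>R V))"
proof -
  define a where "a = - fst P / fst V"
  define W D where "W = spiral_coords P" and "D = spiral_coords V"
  define W' D' where "W' = spiral_coords (mirror P)" and "D' = spiral_coords (mirror V)"
  have fst_line: "fst (P + t *\<^sub>R V) = (t - a) * fst V" for t
    using V by (simp add: a_def field_simps)
  have right: "fst (P + t *\<^sub>R V) \<ge> 0" if "a \<le> t" for t
    using that V unfolding fst_line by simp
  have left: "fst (P + t *\<^sub>R V) \<le> 0" if "t \<le> a" for t
    using that V unfolding fst_line by (simp add: mult_nonpos_nonneg)
  have pos: "norm (W + t *\<^sub>R D) + fst (W + t *\<^sub>R D) > 0" if "a \<le> t" for t
    using norm_add_fst_spiral_coords_pos[OF right[OF that] nz] unfolding W_def D_def by simp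
  have pos': "norm (W' + t *\<^sub>R D') + fst (W' + t *\<^sub>R D') > 0" if "t \<le> a" for t
  proof -
    have "mirror (P + t *\<^sub>R V) \<noteq> 0" using nz[of t] by (metis mirror_eq_0_iff)
    from norm_add_fst_spiral_coords_pos[OF _ this] left[OF that] show ?thesis
      unfolding W'_def D'_def by simp
  qed
  show ?thesis
  proof (rule convex_on_split_at[where a = a])
    show "finsleroidK g (P + t *\<^sub>R V) = spiral_gauge G (W' + t *\<^sub>R D')" if "t \<le> a" for t
      using finsleroidK_left[OF left[OF that]] unfolding W'_def D'_def by simp
    show "finsleroidK g (P + t *\<^sub>R V) = spiral_gauge G (W + t *\<^sub>R D)" if "a \<le> t" for t
      using finsleroidK_right[OF right[OF that]] unfolding W_def D_def by simp
    show "((\<lambda>t. spiral_gauge G (W' + t *\<^sub>R D')) has_real_derivative spiral_gauge_slope G W' D' t) (at t)"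
      if "t \<le> a" for t
      using spiral_gauge_line_has_derivative[OF pos'[OF that]] .
    show "((\<lambda>t. spiral_gauge G (W + t *\<^sub>R D)) has_real_derivative spiral_gauge_slope G W D t) (at t)"
      if "a \<le> t" for t
      using spiral_gauge_line_has_derivative[OF pos[OF that]] .
    show "mono_on {..a} (spiral_gauge_slope G W' D')"
      using pos' by (intro mono_on_spiral_gauge_slope) auto
    show "mono_on {a..} (spiral_gauge_slope G W D)"
      using pos by (intro mono_on_spiral_gauge_slope) auto
    show "spiral_gauge_slope G W' D' a = spiral_gauge_slope G W D a"
      unfolding W_def D_def W'_def D'_def
      by (rule spiral_gauge_slope_mirror_axis) (use fst_line[of a] in simp)
  qed
qed

lemma finsleroidK_line_convex_vertical:
  assumes nz: "\<And>t. P + t *\<^sub>R V \<noteq> 0" and V: "fst V = 0" and P: "fst P \<ge> 0"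
  shows "convex_on UNIV (\<lambda>t. finsleroidK g (P + t *\<^sub>R V))"
proof -
  define W D where "W = spiral_coords P" and "D = spiral_coords V"
  have K: "finsleroidK g (P + t *\<^sub>R V) = spiral_gauge G (W + t *\<^sub>R D)" for t
    using finsleroidK_right[of "P + t *\<^sub>R V"] V P unfolding W_def D_def by simp
  have pos: "norm (W + t *\<^sub>R D) + fst (W + t *\<^sub>R D) > 0" for t
    using norm_add_fst_spiral_coords_pos[of "P + t *\<^sub>R V"] V P nz[of t] unfolding W_def D_def by simp
  have "mono_on UNIV (spiral_gauge_slope G W D)"
    using pos by (intro mono_on_spiral_gauge_slope) auto
  then show ?thesis unfolding K
    by (intro convex_on_realI[OF _ spiral_gauge_line_has_derivative[OF pos]])
      (auto dest: mono_onD)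
qed

lemma finsleroidK_line_through_origin:
  "finsleroidK g ((t - t0) *\<^sub>R V)
     = max (finsleroidK g V * t + - t0 * finsleroidK g V)
           (- finsleroidK g (- V) * t + t0 * finsleroidK g (- V))"
proof (cases "t0 \<le> t")
  case True
  then have "finsleroidK g ((t - t0) *\<^sub>R V) = (t - t0) * finsleroidK g V"
    by (intro finsleroidK_scaleR) simp
  moreover have "(t0 - t) * finsleroidK g (- V) \<le> 0"
    using True finsleroidK_nonneg[of "- V"] by (simp add: mult_nonpos_nonneg)
  moreover have "(t - t0) * finsleroidK g V \<ge> 0"
    using True finsleroidK_nonneg[of V] by simp
  ultimately show ?thesis by (simp add: algebra_simps)
next
  case False
  then have "finsleroidK g ((t0 - t) *\<^sub>R (- V)) = (t0 - t) * finsleroidK g (- V)"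
    by (intro finsleroidK_scaleR) simp
  moreover have "(t - t0) * finsleroidK g V \<le> 0"
    using False finsleroidK_nonneg[of V] by (simp add: mult_nonpos_nonneg)
  moreover have "(t0 - t) * finsleroidK g (- V) \<ge> 0"
    using False finsleroidK_nonneg[of "- V"] by simp
  moreover have "(t - t0) *\<^sub>R V = (t0 - t) *\<^sub>R (- V)" by (simp add: algebra_simps)
  ultimately show ?thesis by (simp add: algebra_simps)
qed

lemma finsleroidK_line_convex: "convex_on UNIV (\<lambda>t. finsleroidK g (P + t *\<^sub>R V))"
proof (cases "\<exists>t0. P + t0 *\<^sub>R V = 0")
  case True
  then obtain t0 where "P = - t0 *\<^sub>R V" by (metis add.commute eq_neg_iff_add_eq_0 scaleR_minus_left)
  then have "(\<lambda>t. finsleroidK g (P + t *\<^sub>R V)) = (\<lambda>t. finsleroidK g ((t - t0) *\<^sub>R V))"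
    by (simp add: algebra_simps)
  also have "\<dots> = (\<lambda>t. max (finsleroidK g V * t + - t0 * finsleroidK g V)
      (- finsleroidK g (- V) * t + t0 * finsleroidK g (- V)))"
    unfolding finsleroidK_line_through_origin ..
  finally show ?thesis by (simp only: convex_on_max_affine)
next
  case False
  then have nz: "P + t *\<^sub>R V \<noteq> 0" "mirror P + t *\<^sub>R mirror V \<noteq> 0" for t
    using mirror_eq_0_iff[of "P + t *\<^sub>R V"] by auto
  have mirror_line: "finsleroidK g (mirror P + t *\<^sub>R mirror V) = finsleroidK g (P + t *\<^sub>R V)" for t
    using finsleroidK_mirror[of "P + t *\<^sub>R V"] by simp
  consider "fst V > 0" | "fst V < 0" | "fst V = 0" "fst P \<ge> 0" | "fst V = 0" "fst P < 0"
    by linarith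
  then show ?thesis
  proof cases
    case 1
    then show ?thesis using finsleroidK_line_convex_right[OF nz(1)] by simp
  next
    case 2
    then show ?thesis using finsleroidK_line_convex_right[OF nz(2)] by (simp add: mirror_line)
  next
    case 3
    then show ?thesis using finsleroidK_line_convex_vertical[OF nz(1)] by simp
  next
    case 4
    then show ?thesis using finsleroidK_line_convex_vertical[OF nz(2)] by (simp add: mirror_line)
  qed
qed

lemma convex_finsleroid_ball: "convex {R. finsleroidK g R \<le> 1}"
proof (rule convexI)
  fix x y :: "real \<times> real" and u v :: real
  assume x: "x \<in> {R. finsleroidK g R \<le> 1}" and y: "y \<in> {R. finsleroidK g R \<le> 1}"
    and uv: "0 \<le> u" "0 \<le> v" "u + v = 1"
  have "u *\<^sub>R x + v *\<^sub>R y = x + ((1 - v) * 0 + v * 1) *\<^sub>R (y - x)"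
    using uv by (simp add: algebra_simps flip: scaleR_add_left)
  moreover have "finsleroidK g (x + ((1 - v) * 0 + v * 1) *\<^sub>R (y - x))
     \<le> (1 - v) * finsleroidK g x + v * finsleroidK g y"
    using convex_onD[OF finsleroidK_line_convex[of x "y - x"], of v 0 1] uv by simp
  moreover have "(1 - v) * finsleroidK g x + v * finsleroidK g y \<le> (1 - v) * 1 + v * 1"
    using x y uv by (intro add_mono mult_left_mono) auto
  ultimately show "u *\<^sub>R x + v *\<^sub>R y \<in> {R. finsleroidK g R \<le> 1}" by simp
qed

end

section \<open>Closed curves from a mirrored arc\<close>

lemma has_vector_derivative_reflected:
  assumes "(f has_vector_derivative f') (at (c - x))"
  shows "((\<lambda>x. e *\<^sub>R mirror (f (c - x))) has_vector_derivative (- e) *\<^sub>R mirror f') (at x)"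
proof -
  have "((\<lambda>x. c - x) has_vector_derivative - 1) (at x)"
    by (auto intro!: derivative_eq_intros)
  from vector_diff_chain_at[OF this assms]
  have "((\<lambda>x. f (c - x)) has_vector_derivative - f') (at x)" by (simp add: o_def)
  from bounded_linear.has_vector_derivative[OF _ this, of "\<lambda>p. e *\<^sub>R mirror p"]
  show ?thesis
    using bounded_linear_compose[OF bounded_linear_scaleR_right bounded_linear_mirror] by simp
qed

text \<open>The arc \<open>f\<close> on \<open>[0, L/2]\<close>, preceded and followed by its mirror image traversed backwards
  and scaled by \<open>e\<close>; with \<open>e = 1\<close> for positions and \<open>e = -1\<close> for velocities the pieces join
  smoothly.\<close>
definition mirror_extension :: "real \<Rightarrow> real \<Rightarrow> (real \<Rightarrow> real \<times> real) \<Rightarrow> real \<Rightarrow> real \<times> real" where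
  "mirror_extension L e f x = (if x \<le> 0 then e *\<^sub>R mirror (f (- x))
     else if x \<le> L / 2 then f x else e *\<^sub>R mirror (f (L - x)))"

lemma mirror_extension_has_derivative_at_0:
  assumes L: "L > 0" and df: "(f has_vector_derivative f' 0) (at 0)"
    and j0: "e *\<^sub>R mirror (f 0) = f 0" "(- e) *\<^sub>R mirror (f' 0) = f' 0"
  shows "(mirror_extension L e f has_vector_derivative f' 0) (at 0)"
proof -
  define A where "A x = e *\<^sub>R mirror (f (- x))" for x
  have "(A has_vector_derivative f' 0) (at 0)"
    using has_vector_derivative_reflected[of f "f' 0" 0 0 e] df j0 unfolding A_def by simp
  moreover have "A 0 = f 0" using j0 by (simp add: A_def)
  ultimately have "((\<lambda>x. if x \<le> 0 then A x else f x) has_vector_derivative f' 0) (at 0)"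
    using df by (intro has_vector_derivative_split_at)
  then show ?thesis
    by (rule has_vector_derivative_transform_within_open[where S = "{..<L / 2}"])
      (use L in \<open>auto simp: A_def mirror_extension_def\<close>)
qed

lemma mirror_extension_has_derivative_at_half_period:
  assumes L: "L > 0" and df: "(f has_vector_derivative f' (L / 2)) (at (L / 2))"
    and jL: "e *\<^sub>R mirror (f (L / 2)) = f (L / 2)" "(- e) *\<^sub>R mirror (f' (L / 2)) = f' (L / 2)"
  shows "(mirror_extension L e f has_vector_derivative f' (L / 2)) (at (L / 2))"
proof -
  define B where "B x = e *\<^sub>R mirror (f (L - x))" for x
  have "(B has_vector_derivative f' (L / 2)) (at (L / 2))"
    using has_vector_derivative_reflected[of f "f' (L / 2)" L "L / 2" e] df jL unfolding B_def by simp
  moreover have "f (L / 2) = B (L / 2)" using jL by (simp add: B_def)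
  ultimately have "((\<lambda>x. if x \<le> L / 2 then f x else B x) has_vector_derivative f' (L / 2)) (at (L / 2))"
    using df by (intro has_vector_derivative_split_at)
  then show ?thesis
    by (rule has_vector_derivative_transform_within_open[where S = "{0<..}"])
      (use L in \<open>auto simp: B_def mirror_extension_def\<close>)
qed

lemma mirror_extension_has_derivative:
  assumes L: "L > 0"
    and df: "\<And>s. 0 \<le> s \<Longrightarrow> s \<le> L / 2 \<Longrightarrow> (f has_vector_derivative f' s) (at s)"
    and j0: "e *\<^sub>R mirror (f 0) = f 0" "(- e) *\<^sub>R mirror (f' 0) = f' 0"
    and jL: "e *\<^sub>R mirror (f (L / 2)) = f (L / 2)" "(- e) *\<^sub>R mirror (f' (L / 2)) = f' (L / 2)"
    and x: "- L / 2 < x" "x < L"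
  shows "(mirror_extension L e f has_vector_derivative mirror_extension L (- e) f' x) (at x)"
proof -
  let ?F = "mirror_extension L e f"
  consider "x < 0" | "x = 0" | "0 < x" "x < L / 2" | "x = L / 2" | "L / 2 < x" by linarith
  then show ?thesis
  proof cases
    case 1
    have "((\<lambda>x. e *\<^sub>R mirror (f (0 - x))) has_vector_derivative (- e) *\<^sub>R mirror (f' (- x))) (at x)"
      using has_vector_derivative_reflected[of f "f' (- x)" 0 x e] df[of "- x"] x 1 by simp
    then have "(?F has_vector_derivative (- e) *\<^sub>R mirror (f' (- x))) (at x)"
      by (rule has_vector_derivative_transform_within_open[where S = "{..<0}"])
        (use 1 in \<open>auto simp: mirror_extension_def\<close>)
    with 1 show ?thesis by (simp add: mirror_extension_def)
  next
    case 2
    have "(f has_vector_derivative f' 0) (at 0)" using df[of 0] L by simp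
    from mirror_extension_has_derivative_at_0[of L f f' e, OF L this j0] 2 j0 show ?thesis
      by (simp add: mirror_extension_def)
  next
    case 3
    have "(?F has_vector_derivative f' x) (at x)"
      by (rule has_vector_derivative_transform_within_open[OF df, where S = "{0<..<L / 2}"])
        (use 3 in \<open>auto simp: mirror_extension_def\<close>)
    with 3 show ?thesis by (simp add: mirror_extension_def)
  next
    case 4
    have "(f has_vector_derivative f' (L / 2)) (at (L / 2))" using df[of "L / 2"] L by simp
    from mirror_extension_has_derivative_at_half_period[of L f f' e, OF L this jL] L show ?thesis
      unfolding 4 by (simp add: mirror_extension_def)
  next
    case 5
    have "((\<lambda>x. e *\<^sub>R mirror (f (L - x))) has_vector_derivative (- e) *\<^sub>R mirror (f' (L - x))) (at x)"
      using has_vector_derivative_reflected[of f "f' (L - x)" L x e] df[of "L - x"] x 5 by simp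
    then have "(?F has_vector_derivative (- e) *\<^sub>R mirror (f' (L - x))) (at x)"
      by (rule has_vector_derivative_transform_within_open[where S = "{L / 2<..}"])
        (use 5 L in \<open>auto simp: mirror_extension_def\<close>)
    with 5 L show ?thesis by (simp add: mirror_extension_def)
  qed
qed

lemma mirror_extension_add_period:
  assumes "- L / 2 < x" "x < 0"
  shows "mirror_extension L e f (x + L) = mirror_extension L e f x"
  using assms unfolding mirror_extension_def by simp

lemma mirror_extension_scaleR:
  "mirror_extension L e (\<lambda>s. k s *\<^sub>R f s) x
     = k (if x \<le> 0 then - x else if x \<le> L / 2 then x else L - x) *\<^sub>R mirror_extension L e f x"
  unfolding mirror_extension_def by simp

lemma cross_mirror_extension:
  assumes "\<And>s. cross (f s) (f' s) = c"
  shows "cross (mirror_extension L 1 f x) (mirror_extension L (- 1) f' x) = c"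
  using assms unfolding mirror_extension_def by (simp add: cross_def)

lemma mirror_extension_eq_arc:
  assumes "mirror (f 0) = f 0" "0 \<le> x" "x \<le> L / 2"
  shows "mirror_extension L 1 f x = f x"
  using assms unfolding mirror_extension_def by auto

lemma mirror_extension_eq_mirror_arc:
  assumes "L > 0" "L / 2 < x"
  shows "mirror_extension L 1 f x = mirror (f (L - x))"
  using assms unfolding mirror_extension_def by simp

lemma mirror_extension_inj_on:
  assumes L: "L > 0" and join: "mirror (f 0) = f 0" and inj: "inj_on f {0..L / 2}"
    and nonneg: "\<And>s. 0 \<le> s \<Longrightarrow> s \<le> L / 2 \<Longrightarrow> fst (f s) \<ge> 0"
    and pos: "\<And>s. 0 < s \<Longrightarrow> s < L / 2 \<Longrightarrow> fst (f s) > 0"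
  shows "inj_on (mirror_extension L 1 f) {0..<L}"
proof (rule inj_onI)
  fix x y assume x: "x \<in> {0..<L}" and y: "y \<in> {0..<L}"
    and eq: "mirror_extension L 1 f x = mirror_extension L 1 f y"
  have fst_neg: "fst (mirror_extension L 1 f z) < 0" if "L / 2 < z" "z < L" for z
    using pos[of "L - z"] that unfolding mirror_extension_eq_mirror_arc[OF L that(1)] by simp
  consider "x \<le> L / 2" "y \<le> L / 2" | "L / 2 < x" "L / 2 < y"
    | "x \<le> L / 2" "L / 2 < y" | "L / 2 < x" "y \<le> L / 2" by linarith
  then show "x = y"
  proof cases
    case 1
    then show ?thesis
      using eq x y inj_onD[OF inj] by (simp add: mirror_extension_eq_arc[of f, OF join])
  next
    case 2
    then have "f (L - x) = f (L - y)"
      using eq mirror_extension_eq_mirror_arc[OF L] by (metis mirror_simps(3))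
    then show ?thesis using inj_onD[OF inj, of "L - x" "L - y"] 2 x y by simp
  next
    case 3
    then show ?thesis
      using eq fst_neg[of y] nonneg[of x] x y by (simp add: mirror_extension_eq_arc[of f, OF join])
  next
    case 4
    then show ?thesis
      using eq fst_neg[of x] nonneg[of y] x y by (simp add: mirror_extension_eq_arc[of f, OF join])
  qed
qed

lemma mirror_extension_image:
  assumes L: "L > 0" and join: "mirror (f 0) = f 0"
  shows "mirror_extension L 1 f ` {0..<L} = f ` {0..L / 2} \<union> mirror ` f ` {0<..<L / 2}"
proof (intro equalityI subsetI)
  fix R assume "R \<in> mirror_extension L 1 f ` {0..<L}"
  then obtain x where x: "0 \<le> x" "x < L" and R: "R = mirror_extension L 1 f x" by auto
  show "R \<in> f ` {0..L / 2} \<union> mirror ` f ` {0<..<L / 2}"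
  proof (cases "x \<le> L / 2")
    case True
    then show ?thesis using x unfolding R mirror_extension_eq_arc[of f, OF join x(1) True] by auto
  next
    case False
    then have "R = mirror (f (L - x))" using R mirror_extension_eq_mirror_arc[OF L] by simp
    then show ?thesis using x False by (auto intro!: imageI)
  qed
next
  fix R assume "R \<in> f ` {0..L / 2} \<union> mirror ` f ` {0<..<L / 2}"
  then consider s where "0 \<le> s" "s \<le> L / 2" "R = f s" | s where "0 < s" "s < L / 2" "R = mirror (f s)"
    by auto
  then show "R \<in> mirror_extension L 1 f ` {0..<L}"
  proof cases
    case 1
    then show ?thesis using L mirror_extension_eq_arc[of f, OF join 1(1,2)]
      by (intro image_eqI[of _ _ s]) auto
  next
    case 2
    then show ?thesis using mirror_extension_eq_mirror_arc[OF L, of "L - s" f]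
      by (intro image_eqI[of _ _ "L - s"]) auto
  qed
qed

definition periodic_extension :: "real \<Rightarrow> (real \<Rightarrow> 'a) \<Rightarrow> real \<Rightarrow> 'a" where
  "periodic_extension L F t = F (t - L * of_int \<lfloor>t / L\<rfloor>)"

lemma periodic_extension_shift:
  assumes "L > 0"
  shows "periodic_extension L F (t + of_int k * L) = periodic_extension L F t"
proof -
  have "(t + of_int k * L) / L = t / L + of_int k" using assms by (simp add: field_simps)
  then have "\<lfloor>(t + of_int k * L) / L\<rfloor> = \<lfloor>t / L\<rfloor> + k" by simp
  then show ?thesis unfolding periodic_extension_def by (simp add: algebra_simps)
qed

lemma periodic_extension_add_period:
  "L > 0 \<Longrightarrow> periodic_extension L F (t + L) = periodic_extension L F t"
  using periodic_extension_shift[of L F t 1] by simp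

lemma periodic_extension_eq:
  assumes "0 \<le> x" "x < L"
  shows "periodic_extension L F x = F x"
proof -
  have "\<lfloor>x / L\<rfloor> = 0" using assms by (simp add: floor_eq_iff)
  then show ?thesis unfolding periodic_extension_def by simp
qed

lemma periodic_extension_eq_window:
  assumes "- L / 2 < x" "x < L" and period: "\<And>x. - L / 2 < x \<Longrightarrow> x < 0 \<Longrightarrow> F (x + L) = F x"
  shows "periodic_extension L F x = F x"
proof (cases "0 \<le> x")
  case True
  then show ?thesis using assms periodic_extension_eq by blast
next
  case False
  have "L > 0" using assms by simp
  have "periodic_extension L F x = periodic_extension L F (x + L)"
    by (rule periodic_extension_add_period[symmetric, OF \<open>L > 0\<close>])
  also have "\<dots> = F (x + L)" using assms False by (intro periodic_extension_eq) auto
  finally show ?thesis using period assms False by simp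
qed

lemma periodic_extension_in_image:
  assumes "L > 0"
  shows "periodic_extension L F t \<in> F ` {0..<L}"
proof -
  have "t - L * of_int \<lfloor>t / L\<rfloor> = L * frac (t / L)"
    using assms by (simp add: frac_def algebra_simps)
  moreover have "0 \<le> L * frac (t / L)" "L * frac (t / L) < L"
    using assms frac_ge_0 frac_lt_1 by simp_all
  ultimately have "0 \<le> t - L * of_int \<lfloor>t / L\<rfloor>" "t - L * of_int \<lfloor>t / L\<rfloor> < L"
    by simp_all
  then show ?thesis unfolding periodic_extension_def by simp
qed

lemma periodic_extension_has_derivative:
  assumes L: "L > 0"
    and dF: "\<And>x. - L / 2 < x \<Longrightarrow> x < L \<Longrightarrow> (F has_vector_derivative F' x) (at x)"
    and period: "\<And>x. - L / 2 < x \<Longrightarrow> x < 0 \<Longrightarrow> F (x + L) = F x"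
    and period': "\<And>x. - L / 2 < x \<Longrightarrow> x < 0 \<Longrightarrow> F' (x + L) = F' x"
  shows "(periodic_extension L F has_vector_derivative periodic_extension L F' t) (at t)"
proof -
  define k where "k = \<lfloor>(t + L / 4) / L\<rfloor>"
  define x where "x = t - of_int k * L"
  have "of_int k \<le> (t + L / 4) / L" "(t + L / 4) / L < of_int k + 1"
    unfolding k_def by linarith+
  then have x: "- L / 2 < x" "x < L"
    using L unfolding x_def by (simp_all add: field_simps)
  have window: "periodic_extension L F y = F y" if "- L / 2 < y" "y < L" for y
    using that by (rule periodic_extension_eq_window) (rule period)
  have "(periodic_extension L F has_vector_derivative F' x) (at x)"
    by (rule has_vector_derivative_transform_within_open[OF dF[OF x], where S = "{- L / 2<..<L}"])
      (use x window in auto)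
  moreover have "((\<lambda>s. s - of_int k * L) has_vector_derivative 1) (at t)"
    by (auto intro!: derivative_eq_intros)
  ultimately have "((\<lambda>s. periodic_extension L F (s - of_int k * L)) has_vector_derivative F' x) (at t)"
    using vector_diff_chain_at[of "\<lambda>s. s - of_int k * L" 1 t "periodic_extension L F"]
    unfolding x_def o_def by simp
  moreover have "periodic_extension L F (s - of_int k * L) = periodic_extension L F s" for s
    using periodic_extension_shift[OF L, of F "s - of_int k * L" k] by simp
  moreover have "periodic_extension L F' t = F' x"
    using periodic_extension_shift[OF L, of F' x k] periodic_extension_eq_window[of L x F', OF x period']
    unfolding x_def by simp
  ultimately show ?thesis by simp
qed

lemma periodic_mirror_extension_has_derivative:
  assumes L: "L > 0"
    and df: "\<And>s. 0 \<le> s \<Longrightarrow> s \<le> L / 2 \<Longrightarrow> (f has_vector_derivative f' s) (at s)"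
    and j0: "e *\<^sub>R mirror (f 0) = f 0" "(- e) *\<^sub>R mirror (f' 0) = f' 0"
    and jL: "e *\<^sub>R mirror (f (L / 2)) = f (L / 2)" "(- e) *\<^sub>R mirror (f' (L / 2)) = f' (L / 2)"
  shows "(periodic_extension L (mirror_extension L e f) has_vector_derivative
           periodic_extension L (mirror_extension L (- e) f') t) (at t)"
  by (rule periodic_extension_has_derivative[OF L mirror_extension_has_derivative[OF L df j0 jL]])
    (simp_all add: mirror_extension_add_period)

section \<open>The logarithmic spiral arc\<close>

text \<open>Reparametrised by it, the spiral arc below sweeps area at a constant rate.\<close>
definition areal_param :: "real \<Rightarrow> real \<Rightarrow> real" where
  "areal_param c \<theta> = (if c = 0 then \<theta> else (1 - exp (- c * \<theta>)) / c)"

definition areal_angle :: "real \<Rightarrow> real \<Rightarrow> real" where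
  "areal_angle c s = (if c = 0 then s else - ln (1 - c * s) / c)"

lemma one_minus_mult_areal_param: "1 - c * areal_param c \<theta> = exp (- c * \<theta>)"
  unfolding areal_param_def by simp

lemma areal_angle_areal_param [simp]: "areal_angle c (areal_param c \<theta>) = \<theta>"
  unfolding areal_angle_def using one_minus_mult_areal_param[of c \<theta>] by (simp add: areal_param_def)

lemma areal_param_areal_angle:
  assumes "1 - c * s > 0"
  shows "areal_param c (areal_angle c s) = s"
  using assms unfolding areal_param_def areal_angle_def by (simp add: field_simps)

lemma areal_param_has_derivative: "(areal_param c has_real_derivative exp (- c * \<theta>)) (at \<theta>)"
proof (cases "c = 0")
  case True
  then have "areal_param c = (\<lambda>x. x)" unfolding areal_param_def by (intro ext) simp
  then show ?thesis using True by simp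
next
  case False
  then have "areal_param c = (\<lambda>x. (1 - exp (- c * x)) / c)" unfolding areal_param_def by (intro ext) simp
  then show ?thesis using False by (auto intro!: derivative_eq_intros)
qed

lemma strict_mono_areal_param: "strict_mono (areal_param c)"
proof (rule strict_monoI, rule DERIV_pos_imp_increasing[where f = "areal_param c"])
  show "\<exists>y. (areal_param c has_real_derivative y) (at x) \<and> 0 < y" for x
    using areal_param_has_derivative by (intro exI[of _ "exp (- c * x)"]) simp
qed

lemma areal_param_less_iff [simp]: "areal_param c a < areal_param c b \<longleftrightarrow> a < b"
  using strict_mono_areal_param by (rule strict_mono_less)

lemma areal_param_le_iff [simp]: "areal_param c a \<le> areal_param c b \<longleftrightarrow> a \<le> b"
  using strict_mono_areal_param by (rule strict_mono_less_eq)

lemma areal_angle_has_derivative: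
  assumes "1 - c * s > 0"
  shows "(areal_angle c has_real_derivative exp (c * areal_angle c s)) (at s)"
proof -
  have "exp (c * areal_angle c s) * exp (- c * areal_angle c s) = 1" by (simp flip: exp_add)
  then have "exp (c * areal_angle c s) * (1 - c * s) = 1"
    using one_minus_mult_areal_param[of c "areal_angle c s"] areal_param_areal_angle[OF assms] by simp
  then have e: "exp (c * areal_angle c s) = 1 / (1 - c * s)" using assms by (simp add: eq_divide_eq)
  show ?thesis
  proof (cases "c = 0")
    case True
    then have "areal_angle c = (\<lambda>x. x)" unfolding areal_angle_def by (intro ext) simp
    then show ?thesis using True by simp
  next
    case False
    then have "areal_angle c = (\<lambda>x. - ln (1 - c * x) / c)" unfolding areal_angle_def by (intro ext) simp
    then show ?thesis unfolding e using False assms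
      by (auto intro!: derivative_eq_intros simp: field_simps)
  qed
qed

lemma has_vector_derivative_comp_areal_angle:
  assumes d: "\<And>\<theta>. (f has_vector_derivative exp (- c * \<theta>) *\<^sub>R f' \<theta>) (at \<theta>)"
    and s: "1 - c * (a + s) > 0"
  shows "((\<lambda>s. f (areal_angle c (a + s))) has_vector_derivative f' (areal_angle c (a + s))) (at s)"
proof -
  have "((\<lambda>s. a + s) has_real_derivative 1) (at s)" by (auto intro!: derivative_eq_intros)
  from DERIV_chain2[OF areal_angle_has_derivative[OF s] this]
  have "((\<lambda>s. areal_angle c (a + s)) has_vector_derivative exp (c * areal_angle c (a + s))) (at s)"
    unfolding has_real_derivative_iff_has_vector_derivative by simp
  from vector_diff_chain_at[OF this d]
  have "((\<lambda>s. f (areal_angle c (a + s))) has_vector_derivative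
      exp (c * areal_angle c (a + s)) *\<^sub>R (exp (- c * areal_angle c (a + s)) *\<^sub>R f' (areal_angle c (a + s)))) (at s)"
    by (simp add: o_def)
  moreover have "exp (c * areal_angle c (a + s)) * exp (- c * areal_angle c (a + s)) = 1"
    by (simp flip: exp_add)
  ultimately show ?thesis by simp
qed

text \<open>The curve \<open>r = e\<^bsup>-c\<theta>/2\<^esup>\<close>, \<open>|\<theta>| \<le> \<pi>/2\<close>, in polar coordinates \<open>(u, v)\<close>, pulled back by
  \<open>(x, y) \<mapsto> (k x, y + c k x / 2)\<close>.\<close>
definition spiral_arc :: "real \<Rightarrow> real \<Rightarrow> real \<Rightarrow> real \<times> real" where
  "spiral_arc c k \<theta> = (exp (- c * \<theta> / 2) * cos \<theta> / k, exp (- c * \<theta> / 2) * (sin \<theta> - c * cos \<theta> / 2))"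

definition spiral_arc_velocity :: "real \<Rightarrow> real \<Rightarrow> real \<Rightarrow> real \<times> real" where
  "spiral_arc_velocity c k \<theta> =
     (exp (c * \<theta> / 2) * (- (c * cos \<theta> / 2 + sin \<theta>) / k), exp (c * \<theta> / 2) * ((1 + c^2 / 4) * cos \<theta>))"

lemma spiral_arc_has_derivative:
  assumes k: "k \<noteq> 0"
  shows "(spiral_arc c k has_vector_derivative exp (- c * \<theta>) *\<^sub>R spiral_arc_velocity c k \<theta>) (at \<theta>)"
proof -
  have e: "exp (- c * \<theta>) * exp (c * \<theta> / 2) = exp (- c * \<theta> / 2)"
    by (simp flip: exp_add)
  have d1: "((\<lambda>\<theta>. exp (- c * \<theta> / 2) * cos \<theta> / k) has_real_derivative
      exp (- c * \<theta>) * (exp (c * \<theta> / 2) * (- (c * cos \<theta> / 2 + sin \<theta>) / k))) (at \<theta>)"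
    unfolding mult.assoc[symmetric] e
    using k by (auto intro!: derivative_eq_intros simp: field_simps)
  have d2: "((\<lambda>\<theta>. exp (- c * \<theta> / 2) * (sin \<theta> - c * cos \<theta> / 2)) has_real_derivative
      exp (- c * \<theta>) * (exp (c * \<theta> / 2) * ((1 + c^2 / 4) * cos \<theta>))) (at \<theta>)"
    unfolding mult.assoc[symmetric] e
    using k by (auto intro!: derivative_eq_intros simp: field_simps power2_eq_square)
  show ?thesis
    using has_vector_derivative_Pair[OF d1[unfolded has_real_derivative_iff_has_vector_derivative]
        d2[unfolded has_real_derivative_iff_has_vector_derivative]]
    unfolding spiral_arc_def spiral_arc_velocity_def by simp
qed

lemma spiral_arc_velocity_has_derivative:
  assumes k: "k \<noteq> 0"
  shows "(spiral_arc_velocity c k has_vector_derivative exp (- c * \<theta>) *\<^sub>R ((- (1 + c^2 / 4) * exp (2 * c * \<theta>)) *\<^sub>R spiral_arc c k \<theta>)) (at \<theta>)"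
proof -
  have e: "exp (- c * \<theta>) * (exp (2 * c * \<theta>) * exp (- c * \<theta> / 2)) = exp (c * \<theta> / 2)"
    by (simp flip: exp_add)
  have d1: "((\<lambda>\<theta>. exp (c * \<theta> / 2) * (- (c * cos \<theta> / 2 + sin \<theta>) / k)) has_real_derivative
      exp (- c * \<theta>) * ((- (1 + c^2 / 4) * exp (2 * c * \<theta>)) * (exp (- c * \<theta> / 2) * cos \<theta> / k))) (at \<theta>)"
  proof -
    have "exp (- c * \<theta>) * ((- (1 + c^2 / 4) * exp (2 * c * \<theta>)) * (exp (- c * \<theta> / 2) * cos \<theta> / k))
        = - (1 + c^2 / 4) * (exp (- c * \<theta>) * (exp (2 * c * \<theta>) * exp (- c * \<theta> / 2))) * cos \<theta> / k"
      using k by (simp add: field_simps)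
    also have "\<dots> = - (1 + c^2 / 4) * exp (c * \<theta> / 2) * cos \<theta> / k" unfolding e ..
    finally have e: "exp (- c * \<theta>) * ((- (1 + c^2 / 4) * exp (2 * c * \<theta>)) * (exp (- c * \<theta> / 2) * cos \<theta> / k))
        = - (1 + c^2 / 4) * exp (c * \<theta> / 2) * cos \<theta> / k" .
    show ?thesis unfolding e
      using k by (auto intro!: derivative_eq_intros simp: field_simps power2_eq_square)
  qed
  have d2: "((\<lambda>\<theta>. exp (c * \<theta> / 2) * ((1 + c^2 / 4) * cos \<theta>)) has_real_derivative
      exp (- c * \<theta>) * ((- (1 + c^2 / 4) * exp (2 * c * \<theta>)) * (exp (- c * \<theta> / 2) * (sin \<theta> - c * cos \<theta> / 2)))) (at \<theta>)"
  proof -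
    have "exp (- c * \<theta>) * ((- (1 + c^2 / 4) * exp (2 * c * \<theta>)) * (exp (- c * \<theta> / 2) * (sin \<theta> - c * cos \<theta> / 2)))
        = - (1 + c^2 / 4) * (exp (- c * \<theta>) * (exp (2 * c * \<theta>) * exp (- c * \<theta> / 2))) * (sin \<theta> - c * cos \<theta> / 2)"
      by (simp add: field_simps)
    also have "\<dots> = - (1 + c^2 / 4) * exp (c * \<theta> / 2) * (sin \<theta> - c * cos \<theta> / 2)" unfolding e ..
    finally have e: "exp (- c * \<theta>) * ((- (1 + c^2 / 4) * exp (2 * c * \<theta>)) * (exp (- c * \<theta> / 2) * (sin \<theta> - c * cos \<theta> / 2)))
        = - (1 + c^2 / 4) * exp (c * \<theta> / 2) * (sin \<theta> - c * cos \<theta> / 2)" .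
    show ?thesis unfolding e
      using k by (auto intro!: derivative_eq_intros simp: field_simps power2_eq_square)
  qed
  show ?thesis
    using has_vector_derivative_Pair[OF d1[unfolded has_real_derivative_iff_has_vector_derivative]
        d2[unfolded has_real_derivative_iff_has_vector_derivative]]
    unfolding spiral_arc_velocity_def spiral_arc_def by simp
qed

lemma cross_spiral_arc_velocity:
  assumes "k \<noteq> 0"
  shows "cross (spiral_arc c k \<theta>) (spiral_arc_velocity c k \<theta>) = 1 / k"
proof -
  define A B where "A = exp (- c * \<theta> / 2)" and "B = exp (c * \<theta> / 2)"
  have "A * B = 1" unfolding A_def B_def by (simp flip: exp_add)
  moreover have "sin \<theta> * sin \<theta> + cos \<theta> * cos \<theta> = 1"
    using sin_cos_squared_add[of \<theta>] by (simp add: power2_eq_square)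
  ultimately show ?thesis
    unfolding cross_def spiral_arc_def spiral_arc_velocity_def A_def[symmetric] B_def[symmetric]
    using assms by (simp add: field_simps power2_eq_square; algebra)
qed

lemma mirror_spiral_arc:
  "cos \<theta> = 0 \<Longrightarrow> mirror (spiral_arc c k \<theta>) = spiral_arc c k \<theta>"
  unfolding spiral_arc_def mirror_def by simp

lemma mirror_spiral_arc_velocity:
  "cos \<theta> = 0 \<Longrightarrow> - mirror (spiral_arc_velocity c k \<theta>) = spiral_arc_velocity c k \<theta>"
  unfolding spiral_arc_velocity_def mirror_def by simp

lemma signed_curvature_central_pos:
  assumes "cross a b > 0" and "k > 0"
  shows "signed_curvature b ((- k) *\<^sub>R a) > 0"
proof -
  have "b \<noteq> 0" using assms(1) unfolding cross_def by auto
  then have "sqrt ((fst b)^2 + (snd b)^2) > 0" by (simp add: prod_eq_iff sum_power2_gt_zero_iff)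
  moreover have "fst b * snd ((- k) *\<^sub>R a) - snd b * fst ((- k) *\<^sub>R a) = k * cross a b"
    unfolding cross_def by (simp add: algebra_simps)
  ultimately show ?thesis unfolding signed_curvature_def using assms by simp
qed

section \<open>The indicatrix as a closed curve\<close>

context finsleroid
begin

lemma spiral_coords_inj: "spiral_coords P = spiral_coords Q \<Longrightarrow> P = Q"
  using spiral_coords_eq_0_iff[of "P - Q"] fh_pos
  unfolding spiral_coords_def by (auto simp: prod_eq_iff algebra_simps)

lemma spiral_coords_spiral_arc:
  "spiral_coords (spiral_arc G h \<theta>) = (exp (- G * \<theta> / 2) * cos \<theta>, exp (- G * \<theta> / 2) * sin \<theta>)"
  using fh_pos unfolding spiral_coords_def spiral_arc_def fG_def by (simp add: field_simps)

lemma fst_spiral_arc: "fst (spiral_arc G h \<theta>) = exp (- G * \<theta> / 2) * cos \<theta> / h"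
  unfolding spiral_arc_def by simp

lemma finsleroidK_spiral_arc:
  assumes "- (pi / 2) \<le> \<theta>" "\<theta> \<le> pi / 2"
  shows "finsleroidK g (spiral_arc G h \<theta>) = 1"
proof -
  have "fst (spiral_arc G h \<theta>) \<ge> 0"
    using assms fh_pos cos_ge_zero unfolding fst_spiral_arc by simp
  moreover have "spiral_gauge G (spiral_coords (spiral_arc G h \<theta>))
      = exp (- G * \<theta> / 2) * exp (G * \<theta> / 2)"
    unfolding spiral_coords_spiral_arc using assms pi_gt_zero by (intro spiral_gauge_polar exp_gt_zero) linarith+
  ultimately show ?thesis by (simp add: finsleroidK_right flip: exp_add)
qed

lemma inj_on_spiral_arc: "inj_on (spiral_arc G h) {- (pi / 2)..pi / 2}"
proof (rule inj_onI)
  fix a b assume a: "a \<in> {- (pi / 2)..pi / 2}" and b: "b \<in> {- (pi / 2)..pi / 2}"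
    and "spiral_arc G h a = spiral_arc G h b"
  then have "spiral_coords (spiral_arc G h a) = spiral_coords (spiral_arc G h b)" by simp
  then have polar: "exp (- G * a / 2) * cos a = exp (- G * b / 2) * cos b"
    "exp (- G * a / 2) * sin a = exp (- G * b / 2) * sin b"
    unfolding spiral_coords_spiral_arc prod_eq_iff by simp_all
  define ea eb where "ea = exp (- G * a / 2)" and "eb = exp (- G * b / 2)"
  have "ea^2 = (ea * cos a)^2 + (ea * sin a)^2" by (simp add: power_mult_distrib flip: distrib_left)
  also have "\<dots> = (eb * cos b)^2 + (eb * sin b)^2" using polar unfolding ea_def eb_def by simp
  also have "\<dots> = eb^2" by (simp add: power_mult_distrib flip: distrib_left)
  finally have e: "ea = eb" by (rule power2_eq_imp_eq) (simp_all add: ea_def eb_def)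
  have "sin a = sin b" using polar(2) eb_def unfolding ea_def[symmetric] e by simp
  then show "a = b" using arcsin_sin a b by (metis atLeastAtMost_iff)
qed

lemma finsleroidK_eq_1_imp_spiral_arc:
  assumes K: "finsleroidK g R = 1" and nonneg: "fst R \<ge> 0"
  shows "\<exists>\<theta>\<in>{- (pi / 2)..pi / 2}. R = spiral_arc G h \<theta>"
proof -
  define w where "w = spiral_coords R"
  define \<alpha> where "\<alpha> = arctan (snd w / (norm w + fst w))"
  have "R \<noteq> 0" using K by auto
  then have pos: "norm w + fst w > 0"
    unfolding w_def by (rule norm_add_fst_spiral_coords_pos[OF nonneg])
  have "\<bar>snd w\<bar> \<le> norm w" by (metis norm_snd_le prod.collapse real_norm_def)
  moreover have "fst w \<ge> 0" unfolding w_def using nonneg fh_pos by simp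
  ultimately have "\<bar>snd w\<bar> \<le> norm w + fst w" by linarith
  then have "\<bar>snd w / (norm w + fst w)\<bar> \<le> 1" using pos by (simp add: abs_divide)
  then have "- 1 \<le> snd w / (norm w + fst w)" "snd w / (norm w + fst w) \<le> 1"
    unfolding abs_le_iff by simp_all
  then have "arctan (- 1) \<le> \<alpha>" "\<alpha> \<le> arctan 1"
    unfolding \<alpha>_def arctan_le_iff .
  then have range: "2 * \<alpha> \<in> {- (pi / 2)..pi / 2}" by (simp add: arctan_minus arctan_one)
  have "norm w * exp (G * \<alpha>) = 1"
    using K finsleroidK_right[OF nonneg] unfolding spiral_gauge_def w_def \<alpha>_def by simp
  then have "norm w = exp (- G * (2 * \<alpha>) / 2)" by (simp add: exp_minus field_simps)
  then have "spiral_coords R = spiral_coords (spiral_arc G h (2 * \<alpha>))"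
    using polar_half_angle[OF pos] unfolding spiral_coords_spiral_arc w_def[symmetric] \<alpha>_def[symmetric]
    by (simp add: prod_eq_iff)
  with range show ?thesis by (blast dest: spiral_coords_inj)
qed

lemma finsleroid_indicatrix_right:
  "{R. finsleroidK g R = 1 \<and> fst R \<ge> 0} = spiral_arc G h ` {- (pi / 2)..pi / 2}"
proof (intro equalityI subsetI)
  fix R assume "R \<in> {R. finsleroidK g R = 1 \<and> fst R \<ge> 0}"
  then show "R \<in> spiral_arc G h ` {- (pi / 2)..pi / 2}"
    using finsleroidK_eq_1_imp_spiral_arc by blast
next
  fix R assume "R \<in> spiral_arc G h ` {- (pi / 2)..pi / 2}"
  then obtain \<theta> where "\<theta> \<in> {- (pi / 2)..pi / 2}" "R = spiral_arc G h \<theta>" by auto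
  then show "R \<in> {R. finsleroidK g R = 1 \<and> fst R \<ge> 0}"
    using finsleroidK_spiral_arc fh_pos cos_ge_zero by (simp add: fst_spiral_arc)
qed

lemma finsleroid_indicatrix_right_open:
  "{R. finsleroidK g R = 1 \<and> fst R > 0} = spiral_arc G h ` {- (pi / 2)<..<pi / 2}"
proof -
  have fst_pos: "fst (spiral_arc G h \<theta>) > 0 \<longleftrightarrow> cos \<theta> > 0" for \<theta>
    using fh_pos by (simp add: fst_spiral_arc zero_less_divide_iff zero_less_mult_iff)
  have "cos \<theta> > 0 \<longleftrightarrow> - (pi / 2) < \<theta> \<and> \<theta> < pi / 2" if "\<theta> \<in> {- (pi / 2)..pi / 2}" for \<theta>
  proof (cases "- (pi / 2) < \<theta> \<and> \<theta> < pi / 2")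
    case False
    with that have "\<theta> = pi / 2 \<or> \<theta> = - (pi / 2)" by auto
    then have "cos \<theta> = 0" by (metis cos_pi_half cos_minus)
    with False show ?thesis by simp
  qed (simp add: cos_gt_zero_pi)
  then have open_iff: "\<theta> \<in> {- (pi / 2)<..<pi / 2} \<longleftrightarrow>
      \<theta> \<in> {- (pi / 2)..pi / 2} \<and> fst (spiral_arc G h \<theta>) > 0" for \<theta>
    unfolding fst_pos by auto
  show ?thesis
  proof (intro equalityI subsetI)
    fix R assume R: "R \<in> {R. finsleroidK g R = 1 \<and> fst R > 0}"
    then have "R \<in> {R. finsleroidK g R = 1 \<and> fst R \<ge> 0}" by simp
    then obtain \<theta> where \<theta>: "\<theta> \<in> {- (pi / 2)..pi / 2}" "R = spiral_arc G h \<theta>"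
      unfolding finsleroid_indicatrix_right by auto
    with R have "\<theta> \<in> {- (pi / 2)<..<pi / 2}" unfolding open_iff by simp
    with \<theta>(2) show "R \<in> spiral_arc G h ` {- (pi / 2)<..<pi / 2}" by simp
  next
    fix R assume "R \<in> spiral_arc G h ` {- (pi / 2)<..<pi / 2}"
    then obtain \<theta> where \<theta>: "\<theta> \<in> {- (pi / 2)<..<pi / 2}" "R = spiral_arc G h \<theta>" by auto
    then have "\<theta> \<in> {- (pi / 2)..pi / 2}" "fst (spiral_arc G h \<theta>) > 0"
      using open_iff[of \<theta>] by simp_all
    with \<theta>(2) show "R \<in> {R. finsleroidK g R = 1 \<and> fst R > 0}" using finsleroidK_spiral_arc by simp
  qed
qed

lemma finsleroid_indicatrix_eq:
  "{R. finsleroidK g R = 1} = {R. finsleroidK g R = 1 \<and> fst R \<ge> 0}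
     \<union> mirror ` {R. finsleroidK g R = 1 \<and> fst R > 0}"
proof (intro equalityI subsetI)
  fix R assume R: "R \<in> {R. finsleroidK g R = 1}"
  show "R \<in> {R. finsleroidK g R = 1 \<and> fst R \<ge> 0} \<union> mirror ` {R. finsleroidK g R = 1 \<and> fst R > 0}"
  proof (cases "fst R \<ge> 0")
    case False
    then have "mirror R \<in> {R. finsleroidK g R = 1 \<and> fst R > 0}" using R by simp
    then have "mirror (mirror R) \<in> mirror ` {R. finsleroidK g R = 1 \<and> fst R > 0}" by (rule imageI)
    then show ?thesis by simp
  qed (use R in simp)
qed auto

definition indicatrix_period :: real where
  "indicatrix_period = 2 * (areal_param G (pi / 2) - areal_param G (- (pi / 2)))"

abbreviation "L \<equiv> indicatrix_period"

definition indicatrix_angle :: "real \<Rightarrow> real" where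
  "indicatrix_angle s = areal_angle G (areal_param G (- (pi / 2)) + s)"

lemma indicatrix_period_pos: "L > 0"
  unfolding indicatrix_period_def by simp

lemma half_indicatrix_period: "areal_param G (- (pi / 2)) + L / 2 = areal_param G (pi / 2)"
  unfolding indicatrix_period_def by (simp add: field_simps)

lemma one_minus_mult_indicatrix_param_pos:
  assumes "0 \<le> s" "s \<le> L / 2"
  shows "1 - G * (areal_param G (- (pi / 2)) + s) > 0"
proof (cases "G \<ge> 0")
  case True
  have "G * (areal_param G (- (pi / 2)) + s) \<le> G * areal_param G (pi / 2)"
    using True assms half_indicatrix_period by (intro mult_left_mono) simp_all
  then show ?thesis
    using one_minus_mult_areal_param[of G "pi / 2"] exp_gt_zero[of "- G * (pi / 2)"] by linarith
next
  case False
  have "G * (areal_param G (- (pi / 2)) + s) \<le> G * areal_param G (- (pi / 2))"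
    using False assms by (intro mult_left_mono_neg) simp_all
  then show ?thesis
    using one_minus_mult_areal_param[of G "- (pi / 2)"] exp_gt_zero[of "- G * - (pi / 2)"] by linarith
qed

lemma areal_param_indicatrix_angle:
  assumes "0 \<le> s" "s \<le> L / 2"
  shows "areal_param G (indicatrix_angle s) = areal_param G (- (pi / 2)) + s"
  unfolding indicatrix_angle_def using one_minus_mult_indicatrix_param_pos[OF assms] by (rule areal_param_areal_angle)

lemma indicatrix_angle_areal_param:
  "indicatrix_angle (areal_param G \<theta> - areal_param G (- (pi / 2))) = \<theta>"
  unfolding indicatrix_angle_def by simp

lemma bij_betw_indicatrix_angle: "bij_betw indicatrix_angle {0..L / 2} {- (pi / 2)..pi / 2}"
proof (rule bij_betw_byWitness[where f' = "\<lambda>\<theta>. areal_param G \<theta> - areal_param G (- (pi / 2))"])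
  show "\<forall>s\<in>{0..L / 2}. areal_param G (indicatrix_angle s) - areal_param G (- (pi / 2)) = s"
    using areal_param_indicatrix_angle by simp
  show "\<forall>\<theta>\<in>{- (pi / 2)..pi / 2}. indicatrix_angle (areal_param G \<theta> - areal_param G (- (pi / 2))) = \<theta>"
    using indicatrix_angle_areal_param by blast
  show "indicatrix_angle ` {0..L / 2} \<subseteq> {- (pi / 2)..pi / 2}"
  proof
    fix \<theta> assume "\<theta> \<in> indicatrix_angle ` {0..L / 2}"
    then obtain s where "s \<in> {0..L / 2}" "\<theta> = indicatrix_angle s" by auto
    then have "areal_param G (- (pi / 2)) \<le> areal_param G \<theta>" "areal_param G \<theta> \<le> areal_param G (pi / 2)"
      using areal_param_indicatrix_angle[of s] half_indicatrix_period by auto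
    then show "\<theta> \<in> {- (pi / 2)..pi / 2}" by simp
  qed
  show "(\<lambda>\<theta>. areal_param G \<theta> - areal_param G (- (pi / 2))) ` {- (pi / 2)..pi / 2} \<subseteq> {0..L / 2}"
  proof
    fix s assume "s \<in> (\<lambda>\<theta>. areal_param G \<theta> - areal_param G (- (pi / 2))) ` {- (pi / 2)..pi / 2}"
    then obtain \<theta> where "\<theta> \<in> {- (pi / 2)..pi / 2}" "s = areal_param G \<theta> - areal_param G (- (pi / 2))" by auto
    moreover from this have "areal_param G (- (pi / 2)) \<le> areal_param G \<theta>" "areal_param G \<theta> \<le> areal_param G (pi / 2)"
      by simp_all
    ultimately show "s \<in> {0..L / 2}" using half_indicatrix_period by (auto simp del: areal_param_le_iff)
  qed
qed

lemma bij_betw_indicatrix_angle_open: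
  "bij_betw indicatrix_angle {0<..<L / 2} {- (pi / 2)<..<pi / 2}"
proof (rule bij_betw_byWitness[where f' = "\<lambda>\<theta>. areal_param G \<theta> - areal_param G (- (pi / 2))"])
  show "\<forall>s\<in>{0<..<L / 2}. areal_param G (indicatrix_angle s) - areal_param G (- (pi / 2)) = s"
    using areal_param_indicatrix_angle by simp
  show "\<forall>\<theta>\<in>{- (pi / 2)<..<pi / 2}. indicatrix_angle (areal_param G \<theta> - areal_param G (- (pi / 2))) = \<theta>"
    using indicatrix_angle_areal_param by blast
  show "indicatrix_angle ` {0<..<L / 2} \<subseteq> {- (pi / 2)<..<pi / 2}"
  proof
    fix \<theta> assume "\<theta> \<in> indicatrix_angle ` {0<..<L / 2}"
    then obtain s where "s \<in> {0<..<L / 2}" "\<theta> = indicatrix_angle s" by auto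
    then have "areal_param G (- (pi / 2)) < areal_param G \<theta>" "areal_param G \<theta> < areal_param G (pi / 2)"
      using areal_param_indicatrix_angle[of s] half_indicatrix_period by auto
    then show "\<theta> \<in> {- (pi / 2)<..<pi / 2}" by simp
  qed
  show "(\<lambda>\<theta>. areal_param G \<theta> - areal_param G (- (pi / 2))) ` {- (pi / 2)<..<pi / 2} \<subseteq> {0<..<L / 2}"
  proof
    fix s assume "s \<in> (\<lambda>\<theta>. areal_param G \<theta> - areal_param G (- (pi / 2))) ` {- (pi / 2)<..<pi / 2}"
    then obtain \<theta> where "\<theta> \<in> {- (pi / 2)<..<pi / 2}" "s = areal_param G \<theta> - areal_param G (- (pi / 2))" by auto
    moreover from this have "areal_param G (- (pi / 2)) < areal_param G \<theta>" "areal_param G \<theta> < areal_param G (pi / 2)"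
      by simp_all
    ultimately show "s \<in> {0<..<L / 2}" using half_indicatrix_period by (auto simp del: areal_param_less_iff)
  qed
qed

lemma indicatrix_angle_image: "indicatrix_angle ` {0..L / 2} = {- (pi / 2)..pi / 2}"
  using bij_betw_indicatrix_angle by (rule bij_betw_imp_surj_on)

lemma indicatrix_angle_image_open: "indicatrix_angle ` {0<..<L / 2} = {- (pi / 2)<..<pi / 2}"
  using bij_betw_indicatrix_angle_open by (rule bij_betw_imp_surj_on)

lemma inj_on_indicatrix_angle: "inj_on indicatrix_angle {0..L / 2}"
  using bij_betw_indicatrix_angle by (rule bij_betw_imp_inj_on)

lemma indicatrix_angle_ends: "indicatrix_angle 0 = - (pi / 2)" "indicatrix_angle (L / 2) = pi / 2"
  unfolding indicatrix_angle_def half_indicatrix_period by simp_all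

definition indicatrix_curve :: "real \<Rightarrow> real \<times> real" where
  "indicatrix_curve = periodic_extension L
     (mirror_extension L 1 (\<lambda>s. spiral_arc G h (indicatrix_angle s)))"

definition indicatrix_velocity :: "real \<Rightarrow> real \<times> real" where
  "indicatrix_velocity = periodic_extension L
     (mirror_extension L (- 1) (\<lambda>s. spiral_arc_velocity G h (indicatrix_angle s)))"

definition indicatrix_acceleration :: "real \<Rightarrow> real \<times> real" where
  "indicatrix_acceleration = periodic_extension L (mirror_extension L 1
     (\<lambda>s. (- (1 + G^2 / 4) * exp (2 * G * indicatrix_angle s)) *\<^sub>R spiral_arc G h (indicatrix_angle s)))"

lemma indicatrix_curve_has_derivative:
  "(indicatrix_curve has_vector_derivative indicatrix_velocity t) (at t)"
  unfolding indicatrix_curve_def indicatrix_velocity_def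
proof (rule periodic_mirror_extension_has_derivative[OF indicatrix_period_pos])
  show "((\<lambda>s. spiral_arc G h (indicatrix_angle s)) has_vector_derivative
      spiral_arc_velocity G h (indicatrix_angle s)) (at s)" if "0 \<le> s" "s \<le> L / 2" for s
    unfolding indicatrix_angle_def using fh_pos one_minus_mult_indicatrix_param_pos[OF that]
    by (intro has_vector_derivative_comp_areal_angle spiral_arc_has_derivative) auto
qed (simp_all add: indicatrix_angle_ends mirror_spiral_arc mirror_spiral_arc_velocity)

lemma indicatrix_velocity_has_derivative:
  "(indicatrix_velocity has_vector_derivative indicatrix_acceleration t) (at t)"
proof -
  let ?acc = "\<lambda>s. (- (1 + G^2 / 4) * exp (2 * G * indicatrix_angle s)) *\<^sub>R spiral_arc G h (indicatrix_angle s)"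
  have "(indicatrix_velocity has_vector_derivative
      periodic_extension L (mirror_extension L (- (- 1)) ?acc) t) (at t)"
    unfolding indicatrix_velocity_def
  proof (rule periodic_mirror_extension_has_derivative[OF indicatrix_period_pos])
    show "((\<lambda>s. spiral_arc_velocity G h (indicatrix_angle s)) has_vector_derivative ?acc s) (at s)"
      if "0 \<le> s" "s \<le> L / 2" for s
      unfolding indicatrix_angle_def using fh_pos one_minus_mult_indicatrix_param_pos[OF that]
      by (intro has_vector_derivative_comp_areal_angle spiral_arc_velocity_has_derivative) auto
  qed (simp_all add: indicatrix_angle_ends mirror_spiral_arc mirror_spiral_arc_velocity)
  then show ?thesis unfolding indicatrix_acceleration_def by simp
qed

lemma indicatrix_curve_periodic: "indicatrix_curve (t + L) = indicatrix_curve t"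
  unfolding indicatrix_curve_def using indicatrix_period_pos by (rule periodic_extension_add_period)

lemma cross_indicatrix_curve_velocity: "cross (indicatrix_curve t) (indicatrix_velocity t) = 1 / h"
  unfolding indicatrix_curve_def indicatrix_velocity_def periodic_extension_def
  using cross_spiral_arc_velocity fh_pos by (intro cross_mirror_extension) simp

lemma indicatrix_acceleration_central: "\<exists>k>0. indicatrix_acceleration t = (- k) *\<^sub>R indicatrix_curve t"
proof -
  have "1 + G^2 / 4 > 0" by (simp add: add_pos_nonneg)
  then show ?thesis
    unfolding indicatrix_acceleration_def indicatrix_curve_def periodic_extension_def mirror_extension_scaleR
    by (intro exI conjI) (simp_all only: mult_minus_left, simp)
qed

lemma indicatrix_velocity_nonzero: "indicatrix_velocity t \<noteq> 0"
  using cross_indicatrix_curve_velocity[of t] fh_pos by (auto simp: cross_def)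

lemma signed_curvature_indicatrix_pos:
  "signed_curvature (indicatrix_velocity t) (indicatrix_acceleration t) > 0"
proof -
  obtain k where "k > 0" "indicatrix_acceleration t = (- k) *\<^sub>R indicatrix_curve t"
    using indicatrix_acceleration_central by blast
  then show ?thesis
    using signed_curvature_central_pos cross_indicatrix_curve_velocity fh_pos by simp
qed

lemma mirror_extension_indicatrix_image:
  "mirror_extension L 1 (\<lambda>s. spiral_arc G h (indicatrix_angle s)) ` {0..<L} = {R. finsleroidK g R = 1}"
proof -
  let ?f = "\<lambda>s. spiral_arc G h (indicatrix_angle s)"
  have "mirror (?f 0) = ?f 0" by (simp add: indicatrix_angle_ends mirror_spiral_arc)
  then have "mirror_extension L 1 ?f ` {0..<L} = ?f ` {0..L / 2} \<union> mirror ` ?f ` {0<..<L / 2}"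
    by (rule mirror_extension_image[OF indicatrix_period_pos])
  also have "\<dots> = spiral_arc G h ` indicatrix_angle ` {0..L / 2}
      \<union> mirror ` spiral_arc G h ` indicatrix_angle ` {0<..<L / 2}"
    by (simp only: image_image)
  also have "\<dots> = {R. finsleroidK g R = 1}"
    unfolding indicatrix_angle_image indicatrix_angle_image_open finsleroid_indicatrix_eq
      finsleroid_indicatrix_right finsleroid_indicatrix_right_open ..
  finally show ?thesis .
qed

lemma indicatrix_curve_image: "indicatrix_curve ` {0..<L} = {R. finsleroidK g R = 1}"
  unfolding mirror_extension_indicatrix_image[symmetric] indicatrix_curve_def
  by (rule image_cong) (simp_all add: periodic_extension_eq)

lemma finsleroidK_indicatrix_curve: "finsleroidK g (indicatrix_curve t) = 1"
proof -
  have "indicatrix_curve t \<in> mirror_extension L 1 (\<lambda>s. spiral_arc G h (indicatrix_angle s)) ` {0..<L}"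
    unfolding indicatrix_curve_def by (rule periodic_extension_in_image[OF indicatrix_period_pos])
  then show ?thesis unfolding mirror_extension_indicatrix_image by simp
qed

lemma inj_on_indicatrix_curve: "inj_on indicatrix_curve {0..<L}"
proof -
  let ?f = "\<lambda>s. spiral_arc G h (indicatrix_angle s)"
  have "inj_on ?f {0..L / 2}"
    using comp_inj_on[OF inj_on_indicatrix_angle, of "spiral_arc G h"]
    unfolding indicatrix_angle_image o_def using inj_on_spiral_arc by simp
  moreover have "fst (?f s) \<ge> 0" if "s \<in> {0..L / 2}" for s
  proof -
    have "?f s \<in> spiral_arc G h ` indicatrix_angle ` {0..L / 2}" using that by simp
    then show ?thesis unfolding indicatrix_angle_image finsleroid_indicatrix_right[symmetric] by simp
  qed
  moreover have "fst (?f s) > 0" if "s \<in> {0<..<L / 2}" for s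
  proof -
    have "?f s \<in> spiral_arc G h ` indicatrix_angle ` {0<..<L / 2}" using that by simp
    then show ?thesis unfolding indicatrix_angle_image_open finsleroid_indicatrix_right_open[symmetric] by simp
  qed
  ultimately have "inj_on (mirror_extension L 1 ?f) {0..<L}"
    by (intro mirror_extension_inj_on indicatrix_period_pos)
      (simp_all add: indicatrix_angle_ends mirror_spiral_arc)
  then show ?thesis
    unfolding indicatrix_curve_def by (rule inj_on_cong[THEN iffD1, rotated]) (simp add: periodic_extension_eq)
qed

section \<open>The unit ball\<close>

lemma finsleroidK_le_norm: "finsleroidK g R \<le> 3 * exp (\<bar>G\<bar> * pi / 2) * norm R"
proof -
  have x: "\<bar>fst R\<bar> \<le> norm R" and y: "\<bar>snd R\<bar> \<le> norm R"
    by (metis norm_fst_le prod.collapse real_norm_def, metis norm_snd_le prod.collapse real_norm_def)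
  have "\<bar>h * fq R\<bar> \<le> norm R"
    using fh_pos mult_right_mono[OF fh_le_1, of "\<bar>fst R\<bar>"] x unfolding fq_def by (simp add: abs_mult)
  moreover have "\<bar>fA g R\<bar> \<le> 2 * norm R"
  proof -
    have "\<bar>g\<bar> * \<bar>fst R\<bar> \<le> 2 * \<bar>fst R\<bar>" using g_gt g_lt by (intro mult_right_mono) auto
    then have "\<bar>g * fq R / 2\<bar> \<le> fq R" unfolding fq_def by (simp add: abs_mult)
    then show ?thesis using x y unfolding fA_def fZ_def fq_def by linarith
  qed
  ultimately have bound: "norm (h * fq R, fA g R) \<le> 3 * norm R"
    using norm_Pair_le[of "h * fq R" "fA g R"] by simp
  have "spiral_gauge G (h * fq R, fA g R) \<le> exp (\<bar>G\<bar> * pi / 2) * norm (h * fq R, fA g R)"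
    by (rule spiral_gauge_le)
  also have "\<dots> \<le> exp (\<bar>G\<bar> * pi / 2) * (3 * norm R)"
    using bound by (rule mult_left_mono) simp
  finally show ?thesis unfolding finsleroidK_eq_spiral_gauge by (simp add: ac_simps)
qed

lemma zero_in_interior_finsleroid_ball: "0 \<in> interior {R. finsleroidK g R \<le> 1}"
proof -
  define C where "C = 3 * exp (\<bar>G\<bar> * pi / 2)"
  have C: "C > 0" unfolding C_def by simp
  have "ball 0 (1 / C) \<subseteq> {R. finsleroidK g R \<le> 1}"
  proof
    fix R :: "real \<times> real" assume "R \<in> ball 0 (1 / C)"
    then have "C * norm R < 1" using C by (simp add: field_simps)
    then show "R \<in> {R. finsleroidK g R \<le> 1}" using finsleroidK_le_norm[of R] unfolding C_def by simp
  qed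
  then show ?thesis unfolding mem_interior using C by (intro exI[of _ "1 / C"]) simp
qed

lemma interior_finsleroid_ball: "interior {R. finsleroidK g R \<le> 1} = {R. finsleroidK g R < 1}"
proof (intro equalityI subsetI)
  fix R assume R: "R \<in> interior {R. finsleroidK g R \<le> 1}"
  then obtain e where e: "e > 0" "ball R e \<subseteq> {R. finsleroidK g R \<le> 1}"
    unfolding mem_interior by blast
  show "R \<in> {R. finsleroidK g R < 1}"
  proof (rule ccontr)
    assume "R \<notin> {R. finsleroidK g R < 1}"
    then have K: "finsleroidK g R = 1" using R interior_subset by fastforce
    then have "R \<noteq> 0" by auto
    define c where "c = 1 + e / (2 * norm R)"
    have c: "c > 1" unfolding c_def using e \<open>R \<noteq> 0\<close> by simp
    have "R - c *\<^sub>R R = (1 - c) *\<^sub>R R" by (simp add: algebra_simps)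
    then have "dist R (c *\<^sub>R R) = (c - 1) * norm R" using c by (simp add: dist_norm)
    also have "\<dots> = e / 2" unfolding c_def using \<open>R \<noteq> 0\<close> by simp
    finally have "c *\<^sub>R R \<in> ball R e" using e by simp
    then have "finsleroidK g (c *\<^sub>R R) \<le> 1" using e(2) by blast
    moreover have "finsleroidK g (c *\<^sub>R R) = c" using finsleroidK_scaleR[of c R] c K by simp
    ultimately show False using c by simp
  qed
next
  fix R assume R: "R \<in> {R. finsleroidK g R < 1}"
  show "R \<in> interior {R. finsleroidK g R \<le> 1}"
  proof (cases "R = 0")
    case True
    then show ?thesis using zero_in_interior_finsleroid_ball by simp
  next
    case False
    define c where "c = finsleroidK g R"
    have c: "c > 0" "c < 1" using finsleroidK_pos[OF False] R unfolding c_def by auto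
    have "finsleroidK g ((1 / c) *\<^sub>R R) = 1" using finsleroidK_scaleR[of "1 / c" R] c unfolding c_def by simp
    then have "(1 / c) *\<^sub>R R - (1 - c) *\<^sub>R ((1 / c) *\<^sub>R R - 0) \<in> interior {R. finsleroidK g R \<le> 1}"
      using c by (intro mem_interior_convex_shrink convex_finsleroid_ball zero_in_interior_finsleroid_ball) auto
    moreover have "X - (1 - c) *\<^sub>R (X - 0) = c *\<^sub>R X" for X :: "real \<times> real"
      by (simp add: algebra_simps)
    moreover have "c *\<^sub>R ((1 / c) *\<^sub>R R) = R" using c by simp
    ultimately show ?thesis by metis
  qed
qed

lemma finsleroid_ball_eq_image:
  "{R. finsleroidK g R \<le> 1} = (\<lambda>p. fst p *\<^sub>R indicatrix_curve (snd p)) ` ({0..1} \<times> {0..L})"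
proof (intro equalityI subsetI)
  fix R assume R: "R \<in> {R. finsleroidK g R \<le> 1}"
  show "R \<in> (\<lambda>p. fst p *\<^sub>R indicatrix_curve (snd p)) ` ({0..1} \<times> {0..L})"
  proof (cases "R = 0")
    case True
    then show ?thesis using indicatrix_period_pos by (intro image_eqI[of _ _ "(0, 0)"]) auto
  next
    case False
    define c where "c = finsleroidK g R"
    have c: "c > 0" "c \<le> 1" using finsleroidK_pos[OF False] R unfolding c_def by auto
    have "finsleroidK g ((1 / c) *\<^sub>R R) = 1" using finsleroidK_scaleR[of "1 / c" R] c unfolding c_def by simp
    then have "(1 / c) *\<^sub>R R \<in> indicatrix_curve ` {0..<L}" unfolding indicatrix_curve_image by simp
    then obtain x where x: "x \<in> {0..<L}" "(1 / c) *\<^sub>R R = indicatrix_curve x" by auto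
    then have "c *\<^sub>R ((1 / c) *\<^sub>R R) = c *\<^sub>R indicatrix_curve x" by simp
    then have "R = c *\<^sub>R indicatrix_curve x" using c by simp
    then show ?thesis using c x by (intro image_eqI[of _ _ "(c, x)"]) auto
  qed
next
  fix R assume "R \<in> (\<lambda>p. fst p *\<^sub>R indicatrix_curve (snd p)) ` ({0..1} \<times> {0..L})"
  then obtain p where p: "p \<in> {0..1} \<times> {0..L}" "R = fst p *\<^sub>R indicatrix_curve (snd p)" by blast
  then have "0 \<le> fst p" "fst p \<le> 1" by (auto simp: mem_Times_iff)
  moreover from this have "finsleroidK g R = fst p"
    unfolding p(2) using finsleroidK_indicatrix_curve by (simp add: finsleroidK_scaleR)
  ultimately show "R \<in> {R. finsleroidK g R \<le> 1}" by simp
qed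

lemma continuous_indicatrix_curve: "continuous_on UNIV indicatrix_curve"
  by (intro continuous_at_imp_continuous_on ballI
      has_vector_derivative_continuous[OF indicatrix_curve_has_derivative])

lemma compact_finsleroid_ball: "compact {R. finsleroidK g R \<le> 1}"
proof -
  have "continuous_on UNIV (\<lambda>p :: real \<times> real. fst p *\<^sub>R indicatrix_curve (snd p))"
    by (intro continuous_intros continuous_on_compose2[OF continuous_indicatrix_curve]) auto
  then show ?thesis unfolding finsleroid_ball_eq_image
    by (intro compact_continuous_image compact_Times compact_Icc) (auto intro: continuous_on_subset)
qed

lemma frontier_finsleroid_ball: "frontier {R. finsleroidK g R \<le> 1} = {R. finsleroidK g R = 1}"
  using compact_imp_closed[OF compact_finsleroid_ball]
  unfolding frontier_def interior_finsleroid_ball by auto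

end

theorem theorem1p2:
  fixes g :: real
  assumes "-2 < g" and "g < 2"
  shows "compact {R. finsleroidK g R \<le> 1}
       \<and> convex {R. finsleroidK g R \<le> 1}
       \<and> interior {R. finsleroidK g R \<le> 1} \<noteq> {}
       \<and> frontier {R. finsleroidK g R \<le> 1} = {R. finsleroidK g R = 1}
       \<and> (\<exists>(\<gamma> :: real \<Rightarrow> real \<times> real) d1 d2 L. L > 0
            \<and> (\<forall>t. \<gamma> (t + L) = \<gamma> t)
            \<and> inj_on \<gamma> {0..<L}
            \<and> \<gamma> ` {0..<L} = {R. finsleroidK g R = 1}
            \<and> (\<forall>t. (\<gamma> has_vector_derivative d1 t) (at t))
            \<and> (\<forall>t. (d1 has_vector_derivative d2 t) (at t))
            \<and> (\<forall>t. d1 t \<noteq> 0)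
            \<and> (\<forall>t. signed_curvature (d1 t) (d2 t) > 0))"
proof -
  interpret finsleroid g using assms by unfold_locales
  have "interior {R. finsleroidK g R \<le> 1} \<noteq> {}"
    using zero_in_interior_finsleroid_ball by blast
  then show ?thesis
    using compact_finsleroid_ball convex_finsleroid_ball frontier_finsleroid_ball
      indicatrix_period_pos indicatrix_curve_periodic inj_on_indicatrix_curve indicatrix_curve_image
      indicatrix_curve_has_derivative indicatrix_velocity_has_derivative indicatrix_velocity_nonzero
      signed_curvature_indicatrix_pos
    by (intro conjI exI[of _ indicatrix_curve] exI[of _ indicatrix_velocity]
        exI[of _ indicatrix_acceleration] exI[of _ L]) simp_all
qed

end
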